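(* (a) (Block 3.) Let $E/F$ be a degree-4 datum, with notation $\rho,\zeta,v,u,L,\theta$ as below, and let $\xi_\alpha,\xi_\beta,\xi_\gamma\in\mathbb Z/2\mathbb Z$ with $\xi_\alpha+\xi_\beta+\xi_\gamma=0$. Let $Q$ be the quiver with vertices $1,2,3$ and arrows $\alpha:2\to1$, $\beta:3\to2$, $\gamma:1\to3$, with fields $F_1=E$, $F_2=F_3=L$, and bimodules $A_\alpha=E^{\theta^{\xi_\alpha}}\otimes_LL$, $A_\beta=L^{\theta^{\xi_\beta}}\otimes_LL$, $A_\gamma=L^{\theta^{\xi_\gamma}}\otimes_LE$. Let $\Lambda'=T_R(A)/\langle\alpha\beta,\beta\gamma,\gamma\alpha\rangle$. Let $\widehat Q$ be $Q$ with an extra loop $s_1$ at vertex $1$, let $K=L$, $\sigma_a=\theta^{\xi_a}$ for $a\in\{\alpha,\beta,\gamma\}$, $\sigma_{s_1}=1_L$, and $\Lambda=L_{\boldsymbol\sigma}\widehat Q/\langle \alpha\beta,\beta\gamma,\gamma\alpha,\,s_1^2-ue_1\rangle$. Then $\Lambda'\cong\Lambda$ as $F$-algebras. (b) (Block 9.) Let $L/F$ be a degree-2 datum. Let $Q$ be as in (a) with fields $F_1=L$, $F_2=F_3=F$ and bimodules $A_\alpha=L\otimes_FF$, $A_\beta=F\otimes_FF$, $A_\gamma=F\otimes_FL$, and let $\Lambda'=T_R(A)/\langle\alpha\beta,\beta\gamma,\gamma\alpha\rangle$. Let $\widehat Q$ be $Q$ with an extra loop $s_1$ at $1$, $K=F$,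 all $\sigma$'s equal to $1_F$, and $\Lambda=F\widehat Q/\langle\alpha\beta,\beta\gamma,\gamma\alpha,\,s_1^2-u^2e_1\rangle$. Then $\Lambda'\cong\Lambda$ as $F$-algebras.
   Context: Degree-2 datum: a degree-2 field extension $L/F$ with $\operatorname{char}F\neq2$; $\theta$ denotes the nontrivial element of $\operatorname{Gal}(L/F)$ and $u\in L\setminus\{0\}$ satisfies $\theta(u)=-u$ (so $u^2\in F$). Degree-4 datum: a cyclic Galois extension $E/F$ of degree 4 with $F$ containing a primitive 4th root of unity $\zeta$; $\rho$ is a generator of $\operatorname{Gal}(E/F)$, $v\in E\setminus\{0\}$ satisfies $\rho(v)=\zeta v$, $u:=v^2$, $L:=F(u)$ is the unique intermediate field with $[L:F]=2$, and $\theta:=\rho|_L$ generates $\operatorname{Gal}(L/F)$ (so $\theta(u)=-u$). Twisted bimodules: for fields $K'''\subseteq K',K''$ and an automorphism $g$ of $K'''$, $K'^{g}\otimes_{K'''}K''$ is the $K'$-$K''$-bimodule where $K'^g$ is $K'$ with left multiplication and right action $m\star z=m\,g(z)$ ($z\in K'''$). Tensor ring of a species: for a quiver $Q$ with fields $F_i$ at vertices and for each arrow $a:t(a)\to h(a)$ a bimodule $A_a=F_{h(a)}^{g_a}\otimes_{F_{h(a)}\cap F_{t(a)}}F_{t(a)}$, put $R=\prod_iF_i$ (with primitive idempotents $e_i$), $A=\bigoplus_aA_a$ (an $R$-$R$-bimodule) and $T_R(A)=\bigoplus_{n\ge0}A^{\otimes_Rn}$. The symbol $a$ denotes the element $1\otimes1\in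 A_a$; products of arrows are written right-to-left ($ab$ means $b$ followed by $a$, defined when $h(b)=t(a)$); one has $az=g_a(z)a$ for $z\in F_{h(a)}\cap F_{t(a)}$, and field elements written next to arrows are elements of $F_i\subseteq R$ at the appropriate vertex. $\langle X\rangle$ denotes the two-sided ideal generated by $X$. Semilinear path algebra: for a quiver $\widehat Q$, a field $K$ and automorphisms $\sigma_b\in\operatorname{Gal}(K/F)$ for $b\in\widehat Q_1$, $K_{\boldsymbol\sigma}\widehat Q$ is the tensor ring over $S=\prod_{i\in\widehat Q_0}K$ of the $S$-$S$-bimodule $\bigoplus_b K^{\sigma_b}\otimes_KK$; equivalently the ring generated by $S$ and the arrows $b=e_{h(b)}be_{t(b)}$ subject to $b\lambda=\sigma_b(\lambda)b$ for $\lambda\in K$. When all $\sigma_b$ are trivial this is the ordinary path algebra $K\widehat Q$. *)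

theory Defs
  imports "HOL-Algebra.QuotRing"
begin

section \<open>Field-theoretic data (the big field is the whole type 'a)\<close>

definition subfield_set :: "'a::field set \<Rightarrow> bool" where
  "subfield_set K \<longleftrightarrow> 0 \<in> K \<and> 1 \<in> K \<and> (\<forall>x\<in>K. \<forall>y\<in>K. x + y \<in> K \<and> x - y \<in> K \<and> x * y \<in> K)
     \<and> (\<forall>x\<in>K. inverse x \<in> K)"

definition ext_degree_is :: "'a::field set \<Rightarrow> nat \<Rightarrow> bool" where
  "ext_degree_is K n \<longleftrightarrow> (\<exists>b :: nat \<Rightarrow> 'a.
      (\<forall>x. \<exists>c. (\<forall>i<n. c i \<in> K) \<and> x = (\<Sum>i<n. c i * b i)) \<and>
      (\<forall>c. (\<forall>i<n. c i \<in> K) \<longrightarrow> (\<Sum>i<n. c i * b i) = 0 \<longrightarrow> (\<forall>i<n. c i = 0)))"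

definition field_aut :: "('a::field \<Rightarrow> 'a) \<Rightarrow> bool" where
  "field_aut s \<longleftrightarrow> bij s \<and> (\<forall>x y. s (x + y) = s x + s y \<and> s (x * y) = s x * s y) \<and> s 1 = 1"

definition Gal :: "'a::field set \<Rightarrow> ('a \<Rightarrow> 'a) set" where
  "Gal K = {s. field_aut s \<and> (\<forall>x\<in>K. s x = x)}"

definition cyclic_galois :: "'a::field set \<Rightarrow> nat \<Rightarrow> ('a \<Rightarrow> 'a) \<Rightarrow> bool" where
  "cyclic_galois K n r \<longleftrightarrow> subfield_set K \<and> ext_degree_is K n \<and> finite (Gal K) \<and>
     card (Gal K) = n \<and> r \<in> Gal K \<and> Gal K = {r ^^ k | k. True}"

definition adjoin :: "'a::field set \<Rightarrow> 'a \<Rightarrow> 'a set" where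
  "adjoin K u = \<Inter>{M. subfield_set M \<and> K \<subseteq> M \<and> u \<in> M}"

type_synonym ('g,'a) fa = "'g list \<Rightarrow> 'a"

definition fa_mul :: "('g,'a::field) fa \<Rightarrow> ('g,'a) fa \<Rightarrow> ('g,'a) fa" where
  "fa_mul f g = (\<lambda>w. \<Sum>i\<le>length w. f (take i w) * g (drop i w))"

definition fa_scal :: "'a::field \<Rightarrow> ('g,'a) fa" where
  "fa_scal c = (\<lambda>w. if w = [] then c else 0)"

definition fa_gen :: "'g \<Rightarrow> ('g,'a::field) fa" where
  "fa_gen x = (\<lambda>w. if w = [x] then 1 else 0)"

definition fa_diff :: "('g,'a::field) fa \<Rightarrow> ('g,'a) fa \<Rightarrow> ('g,'a) fa" where
  "fa_diff f g = (\<lambda>w. f w - g w)"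

definition free_alg :: "'a::field set \<Rightarrow> (('g,'a) fa) ring" where
  "free_alg F = \<lparr> carrier = {f. finite {w. f w \<noteq> 0} \<and> range f \<subseteq> F},
                   mult = fa_mul, one = fa_scal 1,
                   zero = (\<lambda>w. 0), add = (\<lambda>f g w. f w + g w) \<rparr>"

datatype arrow = Alpha | Beta | Gamma | S1

datatype 'a sgen = V nat 'a | Arr arrow

text \<open>Generators: V i l stands for l e_i (l in the field at vertex i), Arr a for the arrow a.
  Vs: vertices, Fld: vertex fields, As: arrows, hh/tt: head/tail, tw: twist g_a acting on
  Fld (hh a) \<inter> Fld (tt a).  The relations present T_R(A) with R = prod Fld i and
  A_a = Fld(hh a)^{g_a} \<otimes>_{Fld(hh a) \<inter> Fld(tt a)} Fld(tt a), a = 1 \<otimes> 1.\<close>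
definition species_rels ::
  "'a::field set \<Rightarrow> nat set \<Rightarrow> (nat \<Rightarrow> 'a set) \<Rightarrow> arrow set \<Rightarrow> (arrow \<Rightarrow> nat) \<Rightarrow> (arrow \<Rightarrow> nat)
     \<Rightarrow> (arrow \<Rightarrow> 'a \<Rightarrow> 'a) \<Rightarrow> ('a sgen,'a) fa set" where
  "species_rels F Vs Fld As hh tt tw =
     {fa_gen (V i l) | i l. i \<notin> Vs \<or> l \<notin> Fld i}
   \<union> {fa_gen (Arr a) | a. a \<notin> As}
   \<union> {fa_diff (\<lambda>w. fa_gen (V i l) w + fa_gen (V i m) w) (fa_gen (V i (l + m)))
        | i l m. i \<in> Vs \<and> l \<in> Fld i \<and> m \<in> Fld i}
   \<union> {fa_diff (fa_mul (fa_gen (V i l)) (fa_gen (V i m))) (fa_gen (V i (l * m)))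
        | i l m. i \<in> Vs \<and> l \<in> Fld i \<and> m \<in> Fld i}
   \<union> {fa_mul (fa_gen (V i l)) (fa_gen (V j m))
        | i j l m. i \<in> Vs \<and> j \<in> Vs \<and> i \<noteq> j \<and> l \<in> Fld i \<and> m \<in> Fld j}
   \<union> {fa_diff (\<lambda>w. \<Sum>i\<in>Vs. fa_gen (V i 1) w) (fa_scal 1)}
   \<union> {fa_diff (fa_mul (fa_scal c) (fa_gen (V i l))) (fa_gen (V i (c * l)))
        | c i l. c \<in> F \<and> i \<in> Vs \<and> l \<in> Fld i}
   \<union> {fa_diff (fa_gen (Arr a))
        (fa_mul (fa_mul (fa_gen (V (hh a) 1)) (fa_gen (Arr a))) (fa_gen (V (tt a) 1)))
        | a. a \<in> As}
   \<union> {fa_diff (fa_mul (fa_gen (Arr a)) (fa_gen (V (tt a) z)))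
              (fa_mul (fa_gen (V (hh a) (tw a z))) (fa_gen (Arr a)))
        | a z. a \<in> As \<and> z \<in> Fld (hh a) \<inter> Fld (tt a)}"

definition species_quot ::
  "'a::field set \<Rightarrow> nat set \<Rightarrow> (nat \<Rightarrow> 'a set) \<Rightarrow> arrow set \<Rightarrow> (arrow \<Rightarrow> nat) \<Rightarrow> (arrow \<Rightarrow> nat)
     \<Rightarrow> (arrow \<Rightarrow> 'a \<Rightarrow> 'a) \<Rightarrow> ('a sgen,'a) fa set \<Rightarrow> (('a sgen,'a) fa set) ring" where
  "species_quot F Vs Fld As hh tt tw X =
     free_alg F Quot (genideal (free_alg F) (species_rels F Vs Fld As hh tt tw \<union> X))"

definition species_scal ::
  "'a::field set \<Rightarrow> nat set \<Rightarrow> (nat \<Rightarrow> 'a set) \<Rightarrow> arrow set \<Rightarrow> (arrow \<Rightarrow> nat) \<Rightarrow> (arrow \<Rightarrow> nat)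
     \<Rightarrow> (arrow \<Rightarrow> 'a \<Rightarrow> 'a) \<Rightarrow> ('a sgen,'a) fa set \<Rightarrow> 'a \<Rightarrow> ('a sgen,'a) fa set" where
  "species_scal F Vs Fld As hh tt tw X c =
     a_r_coset (free_alg F) (genideal (free_alg F) (species_rels F Vs Fld As hh tt tw \<union> X)) (fa_scal c)"

definition F_alg_iso :: "'a::field set \<Rightarrow> ('b, 'c) ring_scheme \<Rightarrow> ('d, 'e) ring_scheme
    \<Rightarrow> ('a \<Rightarrow> 'b) \<Rightarrow> ('a \<Rightarrow> 'd) \<Rightarrow> bool" where
  "F_alg_iso F A B sA sB \<longleftrightarrow> (\<exists>h. h \<in> ring_iso A B \<and> (\<forall>c\<in>F. h (sA c) = sB c))"

definition qhd :: "arrow \<Rightarrow> nat" where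
  "qhd a = (case a of Alpha \<Rightarrow> 1 | Beta \<Rightarrow> 2 | Gamma \<Rightarrow> 3 | S1 \<Rightarrow> 1)"
definition qtl :: "arrow \<Rightarrow> nat" where
  "qtl a = (case a of Alpha \<Rightarrow> 2 | Beta \<Rightarrow> 3 | Gamma \<Rightarrow> 1 | S1 \<Rightarrow> 1)"

definition zero_rels :: "('a sgen,'a::field) fa set" where
  "zero_rels = {fa_mul (fa_gen (Arr Alpha)) (fa_gen (Arr Beta)),
                fa_mul (fa_gen (Arr Beta)) (fa_gen (Arr Gamma)),
                fa_mul (fa_gen (Arr Gamma)) (fa_gen (Arr Alpha))}"

definition loop_rel :: "'a::field \<Rightarrow> ('a sgen,'a) fa" where
  "loop_rel c = fa_diff (fa_mul (fa_gen (Arr S1)) (fa_gen (Arr S1))) (fa_gen (V 1 c))"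

end

(*
  Both blocks are instances of a single isomorphism. Let K be a subfield of the ambient field E
  with E = K + K t, t not in K and t^2 in K. In Lambda' the field at vertex 1 is E; in Lambda it is
  K, together with a loop s satisfying s^2 = t^2 e_1, which commutes with K e_1 because its twist
  is trivial. Writing l = a + b t, the substitutions l e_1 |-> a e_1 + b s and s |-> t e_1
  respect the defining relations and are mutually inverse on generators, so they induce inverse
  isomorphisms of the presented F-algebras.

  In (b), K = F and t = u: theta u = -u keeps u out of F, and theta (u^2) = u^2 puts u^2 in F.
  In (a), K = L = F(v^2) and t = v. Applying rho to an F-linear relation among 1, v, v^2, v^3
  gives the same relation at the conjugates v, zeta v, -v, -zeta v, which forces it to be
  trivial; so 1, v, v^2, v^3 is an F-basis of E and E = L + L v. Moreover rho maps L into itself,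
  and v is not in L since rho^2 fixes L pointwise but sends v to -v.
*)

theory Submission
  imports Defs "HOL-Algebra.Embedded_Algebras" "HOL-Algebra.Multiplicative_Group"
begin

section \<open>The free algebra over a subfield\<close>

lemma subfield_set_sum:
  assumes "subfield_set F" "\<And>x. x \<in> S \<Longrightarrow> f x \<in> F"
  shows "sum f S \<in> F"
proof (cases "finite S")
  case True thus ?thesis using assms(2)
    by (induction S rule: finite_induct) (use assms(1) in \<open>auto simp: subfield_set_def\<close>)
next
  case False thus ?thesis using assms(1) by (simp add: subfield_set_def)
qed

lemma subfield_set_uminus: "subfield_set F \<Longrightarrow> x \<in> F \<Longrightarrow> - x \<in> F"
  unfolding subfield_set_def by (metis diff_0)

lemma sum_triangle_swap:
  fixes T :: "nat \<Rightarrow> nat \<Rightarrow> 'a::comm_monoid_add"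
  shows "(\<Sum>i\<le>n. \<Sum>j\<le>i. T j (i - j)) = (\<Sum>j\<le>n. \<Sum>k\<le>n - j. T j k)"
proof (induction n)
  case 0 thus ?case by simp
next
  case (Suc n)
  have "(\<Sum>j\<le>Suc n. \<Sum>k\<le>Suc n - j. T j k) = (\<Sum>j\<le>n. \<Sum>k\<le>Suc n - j. T j k) + T (Suc n) 0"
    by simp
  also have "(\<Sum>j\<le>n. \<Sum>k\<le>Suc n - j. T j k) = (\<Sum>j\<le>n. (\<Sum>k\<le>n - j. T j k) + T j (Suc n - j))"
    by (rule sum.cong) (auto simp: Suc_diff_le)
  also have "\<dots> = (\<Sum>j\<le>n. \<Sum>k\<le>n - j. T j k) + (\<Sum>j\<le>n. T j (Suc n - j))"
    by (simp add: sum.distrib)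
  finally show ?case using Suc by (simp add: add.assoc)
qed

lemma fa_mul_assoc: "fa_mul (fa_mul f g) h = fa_mul f (fa_mul g (h :: ('g,'a::field) fa))"
proof
  fix w :: "'g list"
  define n where "n = length w"
  define T where "T = (\<lambda>j k. f (take j w) * g (take k (drop j w)) * h (drop (j + k) w))"
  have "fa_mul (fa_mul f g) h w = (\<Sum>i\<le>n. \<Sum>j\<le>i. T j (i - j))"
    unfolding fa_mul_def n_def T_def
    by (rule sum.cong) (auto simp: sum_distrib_right min_def take_drop intro!: sum.cong)
  also have "\<dots> = (\<Sum>j\<le>n. \<Sum>k\<le>n - j. T j k)" by (rule sum_triangle_swap)
  also have "\<dots> = fa_mul f (fa_mul g h) w"
    unfolding fa_mul_def n_def T_def
    by (rule sum.cong) (auto simp: sum_distrib_left mult.assoc add.commute)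
  finally show "fa_mul (fa_mul f g) h w = fa_mul f (fa_mul g h) w" .
qed

lemma fa_scal_mul: "fa_mul (fa_scal c) f = (\<lambda>w. c * f w)"
proof
  fix w
  have "fa_mul (fa_scal c) f w = (\<Sum>i\<in>{0}. fa_scal c (take i w) * f (drop i w))"
    unfolding fa_mul_def by (rule sum.mono_neutral_right) (auto simp: fa_scal_def)
  thus "fa_mul (fa_scal c) f w = c * f w" by (simp add: fa_scal_def)
qed

lemma fa_mul_scal: "fa_mul f (fa_scal c) = (\<lambda>w. f w * c)"
proof
  fix w
  have "fa_mul f (fa_scal c) w = (\<Sum>i\<in>{length w}. f (take i w) * fa_scal c (drop i w))"
    unfolding fa_mul_def by (rule sum.mono_neutral_right) (auto simp: fa_scal_def)
  thus "fa_mul f (fa_scal c) w = f w * c" by (simp add: fa_scal_def)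
qed

lemma fa_mul_add_left: "fa_mul (\<lambda>w. f w + g w) h = (\<lambda>w. fa_mul f h w + fa_mul g h w)"
  by (auto simp: fa_mul_def distrib_right sum.distrib)

lemma fa_mul_add_right: "fa_mul h (\<lambda>w. f w + g w) = (\<lambda>w. fa_mul h f w + fa_mul h g w)"
  by (auto simp: fa_mul_def distrib_left sum.distrib)

lemma free_alg_simps [simp]:
  "mult (free_alg F) = fa_mul"
  "one (free_alg F) = fa_scal 1"
  "zero (free_alg F) = (\<lambda>w. 0)"
  "add (free_alg F) = (\<lambda>f g w. f w + g w)"
  by (simp_all add: free_alg_def)

lemma free_alg_carrierI:
  "finite {w. f w \<noteq> 0} \<Longrightarrow> (\<And>w. f w \<in> F) \<Longrightarrow> f \<in> carrier (free_alg F)"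
  by (auto simp: free_alg_def)

lemma free_alg_carrierD:
  "f \<in> carrier (free_alg F) \<Longrightarrow> finite {w. f w \<noteq> 0}"
  "f \<in> carrier (free_alg F) \<Longrightarrow> f w \<in> F"
  by (auto simp: free_alg_def)

lemma fa_mul_support:
  "{w. fa_mul f g w \<noteq> 0} \<subseteq> (\<lambda>(a, b). a @ b) ` ({w. f w \<noteq> 0} \<times> {w. g w \<noteq> 0})"
proof
  fix w assume "w \<in> {w. fa_mul f g w \<noteq> 0}"
  then obtain i where "f (take i w) * g (drop i w) \<noteq> 0"
    unfolding fa_mul_def by (metis (mono_tags, lifting) mem_Collect_eq sum.neutral)
  then show "w \<in> (\<lambda>(a, b). a @ b) ` ({w. f w \<noteq> 0} \<times> {w. g w \<noteq> 0})"
    by (intro image_eqI[of _ _ "(take i w, drop i w)"]) auto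
qed

context
  fixes F :: "'a::field set"
  assumes F: "subfield_set F"
begin

lemma fa_mul_closed:
  assumes f: "f \<in> carrier (free_alg F)" and g: "g \<in> carrier (free_alg F)"
  shows "fa_mul f g \<in> carrier (free_alg F)"
proof (rule free_alg_carrierI)
  show "finite {w. fa_mul f g w \<noteq> 0}"
    by (rule finite_subset[OF fa_mul_support])
       (use free_alg_carrierD(1)[OF f] free_alg_carrierD(1)[OF g] in auto)
  fix w show "fa_mul f g w \<in> F"
    unfolding fa_mul_def
    by (rule subfield_set_sum[OF F])
       (use F free_alg_carrierD(2)[OF f] free_alg_carrierD(2)[OF g] in \<open>auto simp: subfield_set_def\<close>)
qed

lemma fa_scal_closed: "c \<in> F \<Longrightarrow> fa_scal c \<in> carrier (free_alg F)"
  using F by (intro free_alg_carrierI) (auto simp: fa_scal_def subfield_set_def)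

lemma fa_gen_closed: "fa_gen x \<in> carrier (free_alg F)"
  using F by (intro free_alg_carrierI) (auto simp: fa_gen_def subfield_set_def)

lemma fa_add_closed:
  "f \<in> carrier (free_alg F) \<Longrightarrow> g \<in> carrier (free_alg F) \<Longrightarrow> (\<lambda>w. f w + g w) \<in> carrier (free_alg F)"
  using F by (intro free_alg_carrierI)
    (auto simp: free_alg_def subfield_set_def intro: finite_subset[of _ "{w. f w \<noteq> 0} \<union> {w. g w \<noteq> 0}"])

lemma fa_uminus_closed: "f \<in> carrier (free_alg F) \<Longrightarrow> (\<lambda>w. - f w) \<in> carrier (free_alg F)"
  using F by (intro free_alg_carrierI) (auto dest: free_alg_carrierD intro: subfield_set_uminus)

lemma fa_zero_closed: "(\<lambda>w. 0) \<in> carrier (free_alg F)"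
  using F by (intro free_alg_carrierI) (auto simp: subfield_set_def)

lemma ring_free_alg: "ring (free_alg F :: ('g,'a) fa ring)"
proof (rule ringI)
  show "abelian_group (free_alg F :: ('g,'a) fa ring)"
  proof (rule abelian_groupI)
    fix f :: "('g,'a) fa" assume "f \<in> carrier (free_alg F)"
    then show "\<exists>g\<in>carrier (free_alg F). g \<oplus>\<^bsub>free_alg F\<^esub> f = \<zero>\<^bsub>free_alg F\<^esub>"
      by (intro bexI[of _ "\<lambda>w. - f w"]) (auto simp: fa_uminus_closed)
  qed (auto simp: fa_add_closed fa_zero_closed add.assoc add.commute)
  show "monoid (free_alg F)"
    by (rule monoidI) (use F in \<open>auto simp: fa_mul_closed fa_scal_closed fa_mul_assoc
        fa_scal_mul fa_mul_scal subfield_set_def\<close>)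
qed (auto simp: fa_mul_add_left fa_mul_add_right)

lemma fa_diff_eq_minus:
  assumes f: "f \<in> carrier (free_alg F)" and g: "g \<in> carrier (free_alg F)"
  shows "fa_diff f g = f \<ominus>\<^bsub>free_alg F\<^esub> g"
proof -
  interpret A: ring "free_alg F" by (rule ring_free_alg)
  have "\<ominus>\<^bsub>free_alg F\<^esub> g = (\<lambda>w. - g w)"
    by (rule A.minus_equality) (use g fa_uminus_closed[OF g] in auto)
  then show ?thesis by (simp add: fa_diff_def a_minus_def)
qed

lemma fa_diff_closed:
  "f \<in> carrier (free_alg F) \<Longrightarrow> g \<in> carrier (free_alg F) \<Longrightarrow> fa_diff f g \<in> carrier (free_alg F)"
  using abelian_group.minus_closed[OF ring.is_abelian_group[OF ring_free_alg]]
  by (simp add: fa_diff_eq_minus)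

end

definition fa_monom :: "'a::field \<Rightarrow> 'g list \<Rightarrow> ('g,'a) fa" where
  "fa_monom c u = (\<lambda>w. if w = u then c else 0)"

lemma fa_gen_eq_monom: "fa_gen x = fa_monom 1 [x]"
  by (auto simp: fa_gen_def fa_monom_def)

lemma fa_scal_eq_monom: "fa_scal c = fa_monom c []"
  by (auto simp: fa_scal_def fa_monom_def)

lemma fa_monom_closed: "subfield_set F \<Longrightarrow> c \<in> F \<Longrightarrow> fa_monom c u \<in> carrier (free_alg F)"
  by (rule free_alg_carrierI) (auto simp: fa_monom_def subfield_set_def)

lemma fa_monom_mult: "fa_mul (fa_monom a u) (fa_monom b v) = fa_monom (a * b) (u @ v)"
proof
  fix w
  show "fa_mul (fa_monom a u) (fa_monom b v) w = fa_monom (a * b) (u @ v) w"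
  proof (cases "w = u @ v")
    case True
    have "take i w \<noteq> u" if "i \<le> length w" "i \<noteq> length u" for i
      using that True by (metis length_take min.absorb2)
    then have "fa_mul (fa_monom a u) (fa_monom b v) w
        = (\<Sum>i\<in>{length u}. fa_monom a u (take i w) * fa_monom b v (drop i w))"
      unfolding fa_mul_def by (intro sum.mono_neutral_right) (auto simp: True fa_monom_def)
    thus ?thesis by (simp add: True fa_monom_def)
  next
    case False
    then have "fa_monom a u (take i w) * fa_monom b v (drop i w) = 0" for i
      by (auto simp: fa_monom_def)
    then have "fa_mul (fa_monom a u) (fa_monom b v) w = 0"
      unfolding fa_mul_def by (simp only: sum.neutral_const)
    thus ?thesis using False by (simp add: fa_monom_def)
  qed
qed

lemma finsum_free_alg_apply:
  assumes F: "subfield_set F" and h: "h \<in> S \<rightarrow> carrier (free_alg F)"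
  shows "finsum (free_alg F) h S w = (\<Sum>s\<in>S. h s w)"
proof -
  interpret A: ring "free_alg F" by (rule ring_free_alg[OF F])
  show ?thesis using h
    by (induction S rule: infinite_finite_induct) (auto simp: A.finsum_insert A.finsum_infinite)
qed

lemma fa_monom_decomp:
  assumes F: "subfield_set F" and f: "f \<in> carrier (free_alg F)"
  shows "f = finsum (free_alg F) (\<lambda>u. fa_monom (f u) u) {w. f w \<noteq> 0}"
proof
  fix w
  have "finsum (free_alg F) (\<lambda>u. fa_monom (f u) u) {w. f w \<noteq> 0} w
      = (\<Sum>u | f u \<noteq> 0. fa_monom (f u) u w)"
    using F f by (intro finsum_free_alg_apply) (auto intro: fa_monom_closed free_alg_carrierD)
  also have "\<dots> = f w"
    by (cases "f w = 0") (auto simp: fa_monom_def free_alg_carrierD(1)[OF f] sum.delta)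
  finally show "f w = finsum (free_alg F) (\<lambda>u. fa_monom (f u) u) {w. f w \<noteq> 0} w" ..
qed

section \<open>The universal property of the free algebra\<close>

locale fa_eval = C: ring C for C :: "('c, 'm) ring_scheme" (structure) +
  fixes F :: "'a::field set" and \<sigma> :: "'a \<Rightarrow> 'c" and g :: "'g \<Rightarrow> 'c"
  assumes F: "subfield_set F"
    and \<sigma>_closed: "c \<in> F \<Longrightarrow> \<sigma> c \<in> carrier C"
    and \<sigma>_add: "a \<in> F \<Longrightarrow> b \<in> F \<Longrightarrow> \<sigma> (a + b) = \<sigma> a \<oplus> \<sigma> b"
    and \<sigma>_mult: "a \<in> F \<Longrightarrow> b \<in> F \<Longrightarrow> \<sigma> (a * b) = \<sigma> a \<otimes> \<sigma> b"
    and \<sigma>_one: "\<sigma> 1 = \<one>"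
    and \<sigma>_zero: "\<sigma> 0 = \<zero>"
    and \<sigma>_central: "c \<in> F \<Longrightarrow> x \<in> carrier C \<Longrightarrow> \<sigma> c \<otimes> x = x \<otimes> \<sigma> c"
    and g_closed: "g y \<in> carrier C"
begin

interpretation A: ring "free_alg F" by (rule ring_free_alg[OF F])

definition word_val :: "'g list \<Rightarrow> 'c" where
  "word_val w = foldr (\<lambda>x acc. g x \<otimes> acc) w \<one>"

lemma word_val_closed [simp]: "word_val w \<in> carrier C"
  by (induction w) (auto simp: word_val_def g_closed)

lemma word_val_append: "word_val (u @ v) = word_val u \<otimes> word_val v"
  by (induction u) (auto simp: word_val_def g_closed C.m_assoc word_val_closed[unfolded word_val_def])

definition eval :: "('g,'a) fa \<Rightarrow> 'c" where
  "eval f = finsum C (\<lambda>w. \<sigma> (f w) \<otimes> word_val w) {w. f w \<noteq> 0}"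

lemma eval_eq_finsum:
  assumes f: "f \<in> carrier (free_alg F)" and S: "finite S" "{w. f w \<noteq> 0} \<subseteq> S"
  shows "eval f = finsum C (\<lambda>w. \<sigma> (f w) \<otimes> word_val w) S"
  unfolding eval_def
  by (rule C.add.finprod_mono_neutral_cong_left)
     (use S f in \<open>auto simp: \<sigma>_zero \<sigma>_closed free_alg_carrierD\<close>)

lemma eval_closed: "f \<in> carrier (free_alg F) \<Longrightarrow> eval f \<in> carrier C"
  unfolding eval_def by (rule C.finsum_closed) (auto simp: \<sigma>_closed free_alg_carrierD)

lemma eval_add:
  assumes f: "f \<in> carrier (free_alg F)" and h: "h \<in> carrier (free_alg F)"
  shows "eval (\<lambda>w. f w + h w) = eval f \<oplus> eval h"
proof -
  let ?S = "{w. f w \<noteq> 0} \<union> {w. h w \<noteq> 0}"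
  have S: "finite ?S" using free_alg_carrierD(1)[OF f] free_alg_carrierD(1)[OF h] by auto
  have "eval (\<lambda>w. f w + h w) = finsum C (\<lambda>w. \<sigma> (f w + h w) \<otimes> word_val w) ?S"
    by (rule eval_eq_finsum[OF fa_add_closed[OF F f h] S]) auto
  also have "\<dots> = finsum C (\<lambda>w. \<sigma> (f w) \<otimes> word_val w \<oplus> \<sigma> (h w) \<otimes> word_val w) ?S"
    using f h by (intro C.finsum_cong')
      (auto simp: \<sigma>_add \<sigma>_closed free_alg_carrierD C.l_distr)
  also have "\<dots> = eval f \<oplus> eval h"
    using f h by (simp add: C.finsum_addf \<sigma>_closed free_alg_carrierD eval_eq_finsum[OF _ S])
  finally show ?thesis .
qed

lemma eval_monom:
  assumes c: "c \<in> F" shows "eval (fa_monom c u) = \<sigma> c \<otimes> word_val u"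
  by (subst eval_eq_finsum[OF fa_monom_closed[OF F c], of "{u}"])
     (auto simp: fa_monom_def \<sigma>_closed c)

lemma eval_finsum:
  assumes h: "h \<in> S \<rightarrow> carrier (free_alg F)"
  shows "eval (finsum (free_alg F) h S) = finsum C (\<lambda>s. eval (h s)) S"
  using h
proof (induction S rule: infinite_finite_induct)
  case (insert x S)
  then have "finsum (free_alg F) h S \<in> carrier (free_alg F)" "(\<lambda>s. eval (h s)) \<in> S \<rightarrow> carrier C"
    by (auto intro: A.finsum_closed eval_closed)
  with insert show ?case by (simp add: A.finsum_insert C.finsum_insert eval_add eval_closed)
qed (simp_all add: eval_def)

lemma eval_mult_monom:
  assumes c: "c \<in> F" and d: "d \<in> F"
  shows "eval (fa_mul (fa_monom c u) (fa_monom d v)) = eval (fa_monom c u) \<otimes> eval (fa_monom d v)"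
proof -
  have cd: "\<sigma> c \<in> carrier C" "\<sigma> d \<in> carrier C" using c d \<sigma>_closed by auto
  have "eval (fa_mul (fa_monom c u) (fa_monom d v)) = (\<sigma> c \<otimes> \<sigma> d) \<otimes> (word_val u \<otimes> word_val v)"
    using F c d by (simp add: fa_monom_mult eval_monom \<sigma>_mult word_val_append subfield_set_def)
  also have "\<dots> = \<sigma> c \<otimes> ((word_val u \<otimes> \<sigma> d) \<otimes> word_val v)"
    using cd by (simp add: C.m_assoc \<sigma>_central d)
  also have "\<dots> = eval (fa_monom c u) \<otimes> eval (fa_monom d v)"
    using cd by (simp add: C.m_assoc eval_monom c d)
  finally show ?thesis .
qed

lemma eval_mult_monom_left:
  assumes c: "c \<in> F" and h: "h \<in> carrier (free_alg F)"
  shows "eval (fa_mul (fa_monom c u) h) = eval (fa_monom c u) \<otimes> eval h"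
proof -
  let ?S = "{w. h w \<noteq> 0}" and ?m = "\<lambda>v. fa_monom (h v) v"
  have m: "?m \<in> ?S \<rightarrow> carrier (free_alg F)"
    using F h by (auto intro: fa_monom_closed free_alg_carrierD)
  have cu: "fa_monom c u \<in> carrier (free_alg F)" by (rule fa_monom_closed[OF F c])
  have "eval (fa_mul (fa_monom c u) h) = eval (finsum (free_alg F) (\<lambda>v. fa_mul (fa_monom c u) (?m v)) ?S)"
    using A.finsum_rdistr[OF free_alg_carrierD(1)[OF h] cu m] fa_monom_decomp[OF F h] by simp
  also have "\<dots> = finsum C (\<lambda>v. eval (fa_mul (fa_monom c u) (?m v))) ?S"
    using m cu by (intro eval_finsum) (auto intro: fa_mul_closed[OF F])
  also have "\<dots> = finsum C (\<lambda>v. eval (fa_monom c u) \<otimes> eval (?m v)) ?S"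
    using m cu c h
    by (intro C.finsum_cong')
       (auto simp: eval_mult_monom free_alg_carrierD intro!: C.m_closed eval_closed fa_monom_closed[OF F])
  also have "\<dots> = eval (fa_monom c u) \<otimes> eval h"
    using m cu by (subst (2) fa_monom_decomp[OF F h])
      (simp add: eval_finsum C.finsum_rdistr[OF free_alg_carrierD(1)[OF h]] eval_closed Pi_def)
  finally show ?thesis .
qed

lemma eval_mult:
  assumes f: "f \<in> carrier (free_alg F)" and h: "h \<in> carrier (free_alg F)"
  shows "eval (fa_mul f h) = eval f \<otimes> eval h"
proof -
  let ?S = "{w. f w \<noteq> 0}" and ?m = "\<lambda>u. fa_monom (f u) u"
  have m: "?m \<in> ?S \<rightarrow> carrier (free_alg F)"
    using F f by (auto intro: fa_monom_closed free_alg_carrierD)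
  have "eval (fa_mul f h) = eval (finsum (free_alg F) (\<lambda>u. fa_mul (?m u) h) ?S)"
    using A.finsum_ldistr[OF free_alg_carrierD(1)[OF f] h m] fa_monom_decomp[OF F f] by simp
  also have "\<dots> = finsum C (\<lambda>u. eval (fa_mul (?m u) h)) ?S"
    using m h by (intro eval_finsum) (auto intro: fa_mul_closed[OF F])
  also have "\<dots> = finsum C (\<lambda>u. eval (?m u) \<otimes> eval h) ?S"
    using m f h
    by (intro C.finsum_cong')
       (auto simp: eval_mult_monom_left free_alg_carrierD intro!: C.m_closed eval_closed fa_monom_closed[OF F])
  also have "\<dots> = eval f \<otimes> eval h"
    using m h by (subst (2) fa_monom_decomp[OF F f])
      (simp add: eval_finsum C.finsum_ldistr[OF free_alg_carrierD(1)[OF f]] eval_closed Pi_def)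
  finally show ?thesis .
qed

lemma eval_scal: "c \<in> F \<Longrightarrow> eval (fa_scal c) = \<sigma> c"
  by (simp add: fa_scal_eq_monom eval_monom word_val_def \<sigma>_closed)

lemma eval_gen: "eval (fa_gen x) = g x"
  using F by (simp add: fa_gen_eq_monom eval_monom word_val_def \<sigma>_one g_closed subfield_set_def)

lemma eval_ring_hom: "eval \<in> ring_hom (free_alg F) C"
  using F by (intro ring_hom_memI)
    (auto simp: eval_closed eval_mult eval_add eval_scal \<sigma>_one subfield_set_def)

end

lemma free_alg_hom_eqI:
  assumes F: "subfield_set F" and C: "ring C"
    and \<phi>: "\<phi> \<in> ring_hom (free_alg F) C" and \<psi>: "\<psi> \<in> ring_hom (free_alg F) C"
    and gen: "\<And>x. \<phi> (fa_gen x) = \<psi> (fa_gen x)"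
    and scal: "\<And>c. c \<in> F \<Longrightarrow> \<phi> (fa_scal c) = \<psi> (fa_scal c)"
    and f: "f \<in> carrier (free_alg F)"
  shows "\<phi> f = \<psi> f"
proof -
  interpret A: ring "free_alg F" by (rule ring_free_alg[OF F])
  interpret \<phi>: ring_hom_ring "free_alg F" C \<phi> by (rule ring_hom_ringI2[OF A.ring_axioms C \<phi>])
  interpret \<psi>: ring_hom_ring "free_alg F" C \<psi> by (rule ring_hom_ringI2[OF A.ring_axioms C \<psi>])
  have F1: "1 \<in> F" using F by (simp add: subfield_set_def)
  have word: "\<phi> (fa_monom 1 u) = \<psi> (fa_monom 1 u)" for u
  proof (induction u)
    case Nil
    then show ?case using scal[OF F1] by (simp add: fa_scal_eq_monom)
  next
    case (Cons x u)
    have "fa_monom 1 (x # u) = fa_gen x \<otimes>\<^bsub>free_alg F\<^esub> fa_monom 1 u"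
      by (simp add: fa_gen_eq_monom fa_monom_mult)
    then show ?case
      using Cons gen[of x] fa_gen_closed[OF F] fa_monom_closed[OF F F1] \<phi>.hom_mult \<psi>.hom_mult
      by metis
  qed
  have monom: "\<phi> (fa_monom c u) = \<psi> (fa_monom c u)" if c: "c \<in> F" for c u
  proof -
    have "fa_monom c u = fa_scal c \<otimes>\<^bsub>free_alg F\<^esub> fa_monom 1 u"
      by (simp add: fa_scal_eq_monom fa_monom_mult)
    then show ?thesis
      using word[of u] scal[OF c] fa_scal_closed[OF F c] fa_monom_closed[OF F F1] \<phi>.hom_mult \<psi>.hom_mult
      by metis
  qed
  have m: "(\<lambda>u. fa_monom (f u) u) \<in> {w. f w \<noteq> 0} \<rightarrow> carrier (free_alg F)"
    using fa_monom_closed[OF F] free_alg_carrierD(2)[OF f] by auto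
  have "\<phi> f = finsum C (\<lambda>u. \<phi> (fa_monom (f u) u)) {w. f w \<noteq> 0}"
    using \<phi>.hom_finsum[OF m] by (subst fa_monom_decomp[OF F f]) (simp add: comp_def)
  also have "\<dots> = finsum C (\<lambda>u. \<psi> (fa_monom (f u) u)) {w. f w \<noteq> 0}"
    using monom free_alg_carrierD(2)[OF f] by simp
  also have "\<dots> = \<psi> f"
    using \<psi>.hom_finsum[OF m] by (subst (2) fa_monom_decomp[OF F f]) (simp add: comp_def)
  finally show ?thesis .
qed

lemma FactRing_carrier_rcos:
  "X \<in> carrier (A Quot I) \<Longrightarrow> \<exists>x\<in>carrier A. X = I +>\<^bsub>A\<^esub> x"
  unfolding FactRing_def A_RCOSETS_def' by auto

lemma FactRing_lift:
  assumes A: "ring A" and I: "ideal I A" and C: "ring C" and \<phi>: "\<phi> \<in> ring_hom A C"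
    and kill: "\<And>i. i \<in> I \<Longrightarrow> \<phi> i = \<zero>\<^bsub>C\<^esub>"
  shows "(\<lambda>X. the_elem (\<phi> ` X)) \<in> ring_hom (A Quot I) C"
    and "\<And>a. a \<in> carrier A \<Longrightarrow> the_elem (\<phi> ` (I +>\<^bsub>A\<^esub> a)) = \<phi> a"
proof -
  interpret ring_hom_ring A C \<phi> by (rule ring_hom_ringI2[OF A C \<phi>])
  interpret I: ideal I A by (rule I)
  have lift: "the_elem (\<phi> ` (I +>\<^bsub>A\<^esub> a)) = \<phi> a" if a: "a \<in> carrier A" for a
  proof -
    have "\<phi> ` (I +>\<^bsub>A\<^esub> a) = (\<lambda>i. \<phi> (i \<oplus>\<^bsub>A\<^esub> a)) ` I"
      unfolding a_r_coset_def' by auto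
    also have "\<dots> = (\<lambda>i. \<phi> a) ` I"
      by (rule image_cong[OF refl]) (use a kill I.a_Hcarr in auto)
    also have "\<dots> = {\<phi> a}" by (rule image_constant[OF I.zero_closed])
    finally show ?thesis by simp
  qed
  then show "\<And>a. a \<in> carrier A \<Longrightarrow> the_elem (\<phi> ` (I +>\<^bsub>A\<^esub> a)) = \<phi> a" .
  have \<pi>: "(+>\<^bsub>A\<^esub>) I \<in> ring_hom A (A Quot I)" by (rule I.rcos_ring_hom)
  show "(\<lambda>X. the_elem (\<phi> ` X)) \<in> ring_hom (A Quot I) C"
  proof (rule ring_hom_memI)
    fix X Y assume "X \<in> carrier (A Quot I)" "Y \<in> carrier (A Quot I)"
    then obtain x y where x: "x \<in> carrier A" "X = I +>\<^bsub>A\<^esub> x"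
      and y: "y \<in> carrier A" "Y = I +>\<^bsub>A\<^esub> y"
      using FactRing_carrier_rcos by metis
    have "X \<otimes>\<^bsub>A Quot I\<^esub> Y = I +>\<^bsub>A\<^esub> (x \<otimes>\<^bsub>A\<^esub> y)"
      using ring_hom_mult[OF \<pi> x(1) y(1)] x y by simp
    then show "the_elem (\<phi> ` (X \<otimes>\<^bsub>A Quot I\<^esub> Y)) = the_elem (\<phi> ` X) \<otimes>\<^bsub>C\<^esub> the_elem (\<phi> ` Y)"
      using lift x y by simp
    have "X \<oplus>\<^bsub>A Quot I\<^esub> Y = I +>\<^bsub>A\<^esub> (x \<oplus>\<^bsub>A\<^esub> y)"
      using ring_hom_add[OF \<pi> x(1) y(1)] x y by simp
    then show "the_elem (\<phi> ` (X \<oplus>\<^bsub>A Quot I\<^esub> Y)) = the_elem (\<phi> ` X) \<oplus>\<^bsub>C\<^esub> the_elem (\<phi> ` Y)"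
      using lift x y by simp
  next
    fix X assume "X \<in> carrier (A Quot I)"
    then obtain x where "x \<in> carrier A" "X = I +>\<^bsub>A\<^esub> x" using FactRing_carrier_rcos by metis
    then show "the_elem (\<phi> ` X) \<in> carrier C" using lift by simp
  next
    show "the_elem (\<phi> ` \<one>\<^bsub>A Quot I\<^esub>) = \<one>\<^bsub>C\<^esub>"
      using lift[of "\<one>\<^bsub>A\<^esub>"] by (simp add: FactRing_def)
  qed
qed

section \<open>Isomorphisms between presented algebras\<close>

abbreviation fa_quot :: "'a::field set \<Rightarrow> ('g,'a) fa set \<Rightarrow> (('g,'a) fa set) ring" where
  "fa_quot F R \<equiv> free_alg F Quot genideal (free_alg F) R"

abbreviation fa_class :: "'a::field set \<Rightarrow> ('g,'a) fa set \<Rightarrow> ('g,'a) fa \<Rightarrow> ('g,'a) fa set" where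
  "fa_class F R f \<equiv> genideal (free_alg F) R +>\<^bsub>free_alg F\<^esub> f"

definition is_subst_hom :: "'a::field set \<Rightarrow> ('h,'a) fa set \<Rightarrow> ('g \<Rightarrow> ('h,'a) fa)
    \<Rightarrow> (('g,'a) fa \<Rightarrow> ('h,'a) fa set) \<Rightarrow> bool" where
  "is_subst_hom F R g \<Phi> \<longleftrightarrow> \<Phi> \<in> ring_hom (free_alg F) (fa_quot F R) \<and>
     (\<forall>x. \<Phi> (fa_gen x) = fa_class F R (g x)) \<and> (\<forall>c\<in>F. \<Phi> (fa_scal c) = fa_class F R (fa_scal c))"

context
  fixes F :: "'a::field set" and R :: "('g,'a) fa set"
  assumes F: "subfield_set F" and R: "R \<subseteq> carrier (free_alg F)"
begin

lemma genideal_free_alg: "ideal (genideal (free_alg F) R) (free_alg F)"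
  by (rule ring.genideal_ideal[OF ring_free_alg[OF F] R])

lemma ring_fa_quot: "ring (fa_quot F R)"
  by (rule ideal.quotient_is_ring[OF genideal_free_alg])

lemma fa_class_ring_hom: "fa_class F R \<in> ring_hom (free_alg F) (fa_quot F R)"
  by (rule ideal.rcos_ring_hom[OF genideal_free_alg])

lemma fa_class_rel:
  assumes r: "r \<in> R" shows "fa_class F R r = \<zero>\<^bsub>fa_quot F R\<^esub>"
proof -
  interpret I: ideal "genideal (free_alg F) R" "free_alg F" by (rule genideal_free_alg)
  have "r \<in> genideal (free_alg F) R" using ring.genideal_self[OF ring_free_alg[OF F] R] r by blast
  then have "fa_class F R r = genideal (free_alg F) R" by (rule I.a_rcos_const)
  then show ?thesis by (simp add: FactRing_def)
qed

lemma is_subst_hom_fa_class: "is_subst_hom F R fa_gen (fa_class F R)"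
  by (simp add: is_subst_hom_def fa_class_ring_hom)

lemma fa_eval_fa_quot:
  assumes g: "\<And>x. g x \<in> carrier (free_alg F)"
  shows "fa_eval (fa_quot F R) F (\<lambda>c. fa_class F R (fa_scal c)) (\<lambda>x. fa_class F R (g x))"
proof (intro fa_eval.intro fa_eval_axioms.intro)
  fix a b assume a: "a \<in> F" and b: "b \<in> F"
  have add: "fa_scal (a + b) = fa_scal a \<oplus>\<^bsub>free_alg F\<^esub> fa_scal b"
    by (auto simp: fa_scal_def)
  show "fa_class F R (fa_scal (a + b))
      = fa_class F R (fa_scal a) \<oplus>\<^bsub>fa_quot F R\<^esub> fa_class F R (fa_scal b)"
    unfolding add
    by (rule ring_hom_add[OF fa_class_ring_hom fa_scal_closed[OF F a] fa_scal_closed[OF F b]])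
  have mult: "fa_scal (a * b) = fa_scal a \<otimes>\<^bsub>free_alg F\<^esub> fa_scal b"
    unfolding free_alg_simps fa_scal_mul by (auto simp: fa_scal_def)
  show "fa_class F R (fa_scal (a * b))
      = fa_class F R (fa_scal a) \<otimes>\<^bsub>fa_quot F R\<^esub> fa_class F R (fa_scal b)"
    unfolding mult
    by (rule ring_hom_mult[OF fa_class_ring_hom fa_scal_closed[OF F a] fa_scal_closed[OF F b]])
next
  fix c X assume c: "c \<in> F" and X: "X \<in> carrier (fa_quot F R)"
  then obtain x where x: "x \<in> carrier (free_alg F)" "X = fa_class F R x"
    using FactRing_carrier_rcos by blast
  have "fa_scal c \<otimes>\<^bsub>free_alg F\<^esub> x = x \<otimes>\<^bsub>free_alg F\<^esub> fa_scal c"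
    by (simp add: fa_scal_mul fa_mul_scal mult.commute)
  then show "fa_class F R (fa_scal c) \<otimes>\<^bsub>fa_quot F R\<^esub> X = X \<otimes>\<^bsub>fa_quot F R\<^esub> fa_class F R (fa_scal c)"
    using ring_hom_mult[OF fa_class_ring_hom fa_scal_closed[OF F c] x(1)]
      ring_hom_mult[OF fa_class_ring_hom x(1) fa_scal_closed[OF F c]] x(2)
    by simp
next
  show "fa_class F R (fa_scal 1) = \<one>\<^bsub>fa_quot F R\<^esub>"
    using ring_hom_one[OF fa_class_ring_hom] by simp
  have zero: "fa_scal 0 = \<zero>\<^bsub>free_alg F\<^esub>" by (auto simp: fa_scal_def)
  show "fa_class F R (fa_scal 0) = \<zero>\<^bsub>fa_quot F R\<^esub>"
    unfolding zero by (rule ring_hom_zero[OF fa_class_ring_hom ring_free_alg[OF F] ring_fa_quot])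
next
  fix c assume "c \<in> F"
  then show "fa_class F R (fa_scal c) \<in> carrier (fa_quot F R)"
    using ring_hom_closed[OF fa_class_ring_hom fa_scal_closed[OF F]] by blast
next
  fix x show "fa_class F R (g x) \<in> carrier (fa_quot F R)"
    using ring_hom_closed[OF fa_class_ring_hom g] by blast
qed (rule ring_fa_quot, rule F)

lemma is_subst_hom_unique:
  assumes "is_subst_hom F R g \<Phi>" "is_subst_hom F R g \<Psi>" "f \<in> carrier (free_alg F)"
  shows "\<Phi> f = \<Psi> f"
proof (rule free_alg_hom_eqI[OF F ring_fa_quot _ _ _ _ assms(3)])
  show "\<Phi> \<in> ring_hom (free_alg F) (fa_quot F R)" "\<Psi> \<in> ring_hom (free_alg F) (fa_quot F R)"
    using assms(1,2) by (simp_all add: is_subst_hom_def)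
  show "\<Phi> (fa_gen x) = \<Psi> (fa_gen x)" for x
    using assms(1,2) by (simp add: is_subst_hom_def)
  show "c \<in> F \<Longrightarrow> \<Phi> (fa_scal c) = \<Psi> (fa_scal c)" for c
    using assms(1,2) by (simp add: is_subst_hom_def)
qed

end

lemma fa_quot_induced_hom:
  fixes R1 :: "('g1,'a::field) fa set" and R2 :: "('g2,'a) fa set" and g :: "'g1 \<Rightarrow> ('g2,'a) fa"
  assumes F: "subfield_set F"
    and R1: "R1 \<subseteq> carrier (free_alg F)" and R2: "R2 \<subseteq> carrier (free_alg F)"
    and g: "\<And>x. g x \<in> carrier (free_alg F)"
    and kill: "\<And>\<Phi> r. is_subst_hom F R2 g \<Phi> \<Longrightarrow> r \<in> R1 \<Longrightarrow> \<Phi> r = \<zero>\<^bsub>fa_quot F R2\<^esub>"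
  obtains h where "h \<in> ring_hom (fa_quot F R1) (fa_quot F R2)"
    and "is_subst_hom F R2 g (h \<circ> fa_class F R1)"
proof -
  let ?A1 = "free_alg F :: ('g1,'a) fa ring"
  interpret A1: ring ?A1 by (rule ring_free_alg[OF F])
  interpret Q2: ring "fa_quot F R2" by (rule ring_fa_quot[OF F R2])
  interpret E: fa_eval "fa_quot F R2" F "\<lambda>c. fa_class F R2 (fa_scal c)" "\<lambda>x. fa_class F R2 (g x)"
    by (rule fa_eval_fa_quot[OF F R2 g])
  have ev: "is_subst_hom F R2 g E.eval"
    by (simp add: is_subst_hom_def E.eval_ring_hom E.eval_gen E.eval_scal)
  interpret H: ring_hom_ring ?A1 "fa_quot F R2" E.eval
    by (rule ring_hom_ringI2[OF A1.ring_axioms Q2.ring_axioms E.eval_ring_hom])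
  have "R1 \<subseteq> a_kernel ?A1 (fa_quot F R2) E.eval"
    using kill[OF ev] R1 unfolding a_kernel_def' by auto
  then have "genideal ?A1 R1 \<subseteq> a_kernel ?A1 (fa_quot F R2) E.eval"
    by (rule A1.genideal_minimal[OF H.kernel_is_ideal])
  then have "\<And>i. i \<in> genideal ?A1 R1 \<Longrightarrow> E.eval i = \<zero>\<^bsub>fa_quot F R2\<^esub>"
    unfolding a_kernel_def' by auto
  note lift = FactRing_lift[OF A1.ring_axioms genideal_free_alg[OF F R1] Q2.ring_axioms
      E.eval_ring_hom this]
  show thesis
  proof
    show "(\<lambda>X. the_elem (E.eval ` X)) \<in> ring_hom (fa_quot F R1) (fa_quot F R2)" by (rule lift(1))
    show "is_subst_hom F R2 g ((\<lambda>X. the_elem (E.eval ` X)) \<circ> fa_class F R1)"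
      using ev ring_hom_trans[OF fa_class_ring_hom[OF F R1] lift(1)]
      by (simp add: is_subst_hom_def lift(2) fa_gen_closed[OF F] fa_scal_closed[OF F])
  qed
qed

lemma fa_quot_induced_hom_inverse:
  fixes R1 :: "('g1,'a::field) fa set" and R2 :: "('g2,'a) fa set"
    and g :: "'g1 \<Rightarrow> ('g2,'a) fa" and g' :: "'g2 \<Rightarrow> ('g1,'a) fa"
  assumes F: "subfield_set F"
    and R1: "R1 \<subseteq> carrier (free_alg F)" and R2: "R2 \<subseteq> carrier (free_alg F)"
    and h12: "h12 \<in> ring_hom (fa_quot F R1) (fa_quot F R2)" "is_subst_hom F R2 g (h12 \<circ> fa_class F R1)"
    and h21: "h21 \<in> ring_hom (fa_quot F R2) (fa_quot F R1)" "is_subst_hom F R1 g' (h21 \<circ> fa_class F R2)"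
    and inv: "\<And>\<Psi> x. is_subst_hom F R1 g' \<Psi> \<Longrightarrow> \<Psi> (g x) = fa_class F R1 (fa_gen x)"
    and X: "X \<in> carrier (fa_quot F R1)"
  shows "h21 (h12 X) = X"
proof -
  have "is_subst_hom F R1 fa_gen (h21 \<circ> h12 \<circ> fa_class F R1)"
    using h12 h21 inv[OF h21(2)]
      ring_hom_trans[OF ring_hom_trans[OF fa_class_ring_hom[OF F R1] h12(1)] h21(1)]
    by (simp add: is_subst_hom_def comp_assoc)
  then have "(h21 \<circ> h12 \<circ> fa_class F R1) x = fa_class F R1 x" if "x \<in> carrier (free_alg F)" for x
    using is_subst_hom_unique[OF F R1 _ is_subst_hom_fa_class[OF F R1] that] by blast
  moreover obtain x where "x \<in> carrier (free_alg F)" "X = fa_class F R1 x"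
    using FactRing_carrier_rcos[OF X] by blast
  ultimately show ?thesis by simp
qed

lemma fa_quot_F_alg_iso:
  fixes R1 :: "('g1,'a::field) fa set" and R2 :: "('g2,'a) fa set"
    and g :: "'g1 \<Rightarrow> ('g2,'a) fa" and g' :: "'g2 \<Rightarrow> ('g1,'a) fa"
  assumes F: "subfield_set F"
    and R1: "R1 \<subseteq> carrier (free_alg F)" and R2: "R2 \<subseteq> carrier (free_alg F)"
    and g: "\<And>x. g x \<in> carrier (free_alg F)" and g': "\<And>x. g' x \<in> carrier (free_alg F)"
    and kill12: "\<And>\<Phi> r. is_subst_hom F R2 g \<Phi> \<Longrightarrow> r \<in> R1 \<Longrightarrow> \<Phi> r = \<zero>\<^bsub>fa_quot F R2\<^esub>"
    and kill21: "\<And>\<Psi> r. is_subst_hom F R1 g' \<Psi> \<Longrightarrow> r \<in> R2 \<Longrightarrow> \<Psi> r = \<zero>\<^bsub>fa_quot F R1\<^esub>"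
    and inv12: "\<And>\<Psi> x. is_subst_hom F R1 g' \<Psi> \<Longrightarrow> \<Psi> (g x) = fa_class F R1 (fa_gen x)"
    and inv21: "\<And>\<Phi> x. is_subst_hom F R2 g \<Phi> \<Longrightarrow> \<Phi> (g' x) = fa_class F R2 (fa_gen x)"
  shows "F_alg_iso F (fa_quot F R1) (fa_quot F R2)
           (\<lambda>c. fa_class F R1 (fa_scal c)) (\<lambda>c. fa_class F R2 (fa_scal c))"
proof -
  obtain h12 where h12: "h12 \<in> ring_hom (fa_quot F R1) (fa_quot F R2)"
    "is_subst_hom F R2 g (h12 \<circ> fa_class F R1)"
    using fa_quot_induced_hom[of F R1 R2 g, OF F R1 R2 g] kill12 by blast
  obtain h21 where h21: "h21 \<in> ring_hom (fa_quot F R2) (fa_quot F R1)"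
    "is_subst_hom F R1 g' (h21 \<circ> fa_class F R2)"
    using fa_quot_induced_hom[of F R2 R1 g', OF F R2 R1 g'] kill21 by blast
  have "h21 (h12 X) = X" if "X \<in> carrier (fa_quot F R1)" for X
    by (rule fa_quot_induced_hom_inverse[OF F R1 R2 h12 h21]) (use inv12 that in auto)
  moreover have "h12 (h21 X) = X" if "X \<in> carrier (fa_quot F R2)" for X
    by (rule fa_quot_induced_hom_inverse[OF F R2 R1 h21 h12]) (use inv21 that in auto)
  ultimately have "bij_betw h12 (carrier (fa_quot F R1)) (carrier (fa_quot F R2))"
    using ring_hom_closed[OF h12(1)] ring_hom_closed[OF h21(1)]
    by (intro bij_betw_byWitness[where f' = h21]) auto
  moreover have "\<forall>c\<in>F. h12 (fa_class F R1 (fa_scal c)) = fa_class F R2 (fa_scal c)"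
    using h12(2) by (simp add: is_subst_hom_def)
  ultimately show ?thesis
    using h12(1) unfolding F_alg_iso_def ring_iso_def by blast
qed

section \<open>Representations of the species relations\<close>

(* Otherwise the vertex 1 in V 1 l is rewritten to Suc 0 and relations stop matching. *)
declare One_nat_def [simp del]

locale species_rep = ring C for C :: "('c, 'm) ring_scheme" (structure) +
  fixes F :: "'a::field set" and Fld :: "nat \<Rightarrow> 'a set" and As :: "arrow set"
    and tw :: "arrow \<Rightarrow> 'a \<Rightarrow> 'a" and e :: "'a sgen \<Rightarrow> 'c" and sc :: "'a \<Rightarrow> 'c"
  assumes gen_closed [simp]: "e x \<in> carrier C"
    and scal_closed: "c \<in> F \<Longrightarrow> sc c \<in> carrier C"
    and vertex_outside: "i \<notin> {1,2,3} \<or> l \<notin> Fld i \<Longrightarrow> e (V i l) = \<zero>"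
    and arrow_outside: "a \<notin> As \<Longrightarrow> e (Arr a) = \<zero>"
    and vertex_add: "i \<in> {1,2,3} \<Longrightarrow> l \<in> Fld i \<Longrightarrow> m \<in> Fld i \<Longrightarrow> e (V i l) \<oplus> e (V i m) = e (V i (l + m))"
    and vertex_mult: "i \<in> {1,2,3} \<Longrightarrow> l \<in> Fld i \<Longrightarrow> m \<in> Fld i \<Longrightarrow> e (V i l) \<otimes> e (V i m) = e (V i (l * m))"
    and vertex_orth: "i \<in> {1,2,3} \<Longrightarrow> j \<in> {1,2,3} \<Longrightarrow> i \<noteq> j \<Longrightarrow> l \<in> Fld i \<Longrightarrow> m \<in> Fld j \<Longrightarrow>
      e (V i l) \<otimes> e (V j m) = \<zero>"
    and vertex_sum: "e (V 1 1) \<oplus> (e (V 2 1) \<oplus> e (V 3 1)) = \<one>"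
    and scal_vertex: "c \<in> F \<Longrightarrow> i \<in> {1,2,3} \<Longrightarrow> l \<in> Fld i \<Longrightarrow> sc c \<otimes> e (V i l) = e (V i (c * l))"
    and arrow_idem: "a \<in> As \<Longrightarrow> e (Arr a) = e (V (qhd a) 1) \<otimes> e (Arr a) \<otimes> e (V (qtl a) 1)"
    and arrow_twist: "a \<in> As \<Longrightarrow> z \<in> Fld (qhd a) \<Longrightarrow> z \<in> Fld (qtl a) \<Longrightarrow>
      e (Arr a) \<otimes> e (V (qtl a) z) = e (V (qhd a) (tw a z)) \<otimes> e (Arr a)"
begin

lemma vertex_zero:
  assumes "0 \<in> Fld i" shows "e (V i 0) = \<zero>"
proof (cases "i \<in> {1,2,3}")
  case True
  then have "e (V i 0) \<oplus> e (V i 0) = e (V i 0)" using vertex_add[OF True assms assms] by simp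
  then show ?thesis by (simp add: add.l_cancel_one)
qed (use vertex_outside in blast)

end

definition zero_eqs :: "('c, 'm) ring_scheme \<Rightarrow> ('a sgen \<Rightarrow> 'c) \<Rightarrow> bool" where
  "zero_eqs C e \<longleftrightarrow> e (Arr Alpha) \<otimes>\<^bsub>C\<^esub> e (Arr Beta) = \<zero>\<^bsub>C\<^esub> \<and>
     e (Arr Beta) \<otimes>\<^bsub>C\<^esub> e (Arr Gamma) = \<zero>\<^bsub>C\<^esub> \<and> e (Arr Gamma) \<otimes>\<^bsub>C\<^esub> e (Arr Alpha) = \<zero>\<^bsub>C\<^esub>"

locale free_alg_hom =
  fixes F :: "'a::field set" and C :: "('c, 'm) ring_scheme" (structure)
    and \<rho> :: "('a sgen,'a) fa \<Rightarrow> 'c"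
  assumes F: "subfield_set F" and C: "ring C" and hom: "\<rho> \<in> ring_hom (free_alg F) C"
begin

interpretation A: ring "free_alg F" by (rule ring_free_alg[OF F])
interpretation C: ring C by (rule C)
interpretation H: ring_hom_ring "free_alg F" C \<rho> by (rule ring_hom_ringI2[OF A.ring_axioms C hom])

lemmas fa_closed [simp] = fa_gen_closed[OF F] fa_scal_closed[OF F] fa_mul_closed[OF F]
  fa_add_closed[OF F] fa_diff_closed[OF F]

lemma hom_fa_closed: "f \<in> carrier (free_alg F) \<Longrightarrow> \<rho> f \<in> carrier C"
  using H.hom_closed by simp

lemma hom_fa_add [simp]:
  "f \<in> carrier (free_alg F) \<Longrightarrow> g \<in> carrier (free_alg F) \<Longrightarrow> \<rho> (\<lambda>w. f w + g w) = \<rho> f \<oplus> \<rho> g"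
  using H.hom_add[of f g] by simp

lemma hom_fa_mul [simp]:
  "f \<in> carrier (free_alg F) \<Longrightarrow> g \<in> carrier (free_alg F) \<Longrightarrow> \<rho> (fa_mul f g) = \<rho> f \<otimes> \<rho> g"
  using H.hom_mult[of f g] by simp

lemma hom_fa_diff_eq_zero_iff [simp]:
  assumes f: "f \<in> carrier (free_alg F)" and g: "g \<in> carrier (free_alg F)"
  shows "\<rho> (fa_diff f g) = \<zero> \<longleftrightarrow> \<rho> f = \<rho> g"
proof -
  have "\<rho> (fa_diff f g) = \<rho> f \<ominus> \<rho> g"
    using f g H.hom_add[OF f A.a_inv_closed[OF g]] H.hom_a_inv[OF g]
    by (simp add: fa_diff_eq_minus[OF F] a_minus_def)
  then show ?thesis using f g by (simp add: H.hom_closed)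
qed

lemma species_rels_memI:
  "\<And>i l. i \<notin> Vs \<or> l \<notin> Fld i \<Longrightarrow> fa_gen (V i l) \<in> species_rels F Vs Fld As hh tt tw"
  "\<And>a. a \<notin> As \<Longrightarrow> fa_gen (Arr a) \<in> species_rels F Vs Fld As hh tt tw"
  "\<And>i l m. i \<in> Vs \<Longrightarrow> l \<in> Fld i \<Longrightarrow> m \<in> Fld i \<Longrightarrow>
     fa_diff (\<lambda>w. fa_gen (V i l) w + fa_gen (V i m) w) (fa_gen (V i (l + m))) \<in> species_rels F Vs Fld As hh tt tw"
  "\<And>i l m. i \<in> Vs \<Longrightarrow> l \<in> Fld i \<Longrightarrow> m \<in> Fld i \<Longrightarrow>
     fa_diff (fa_mul (fa_gen (V i l)) (fa_gen (V i m))) (fa_gen (V i (l * m))) \<in> species_rels F Vs Fld As hh tt tw"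
  "\<And>i j l m. i \<in> Vs \<Longrightarrow> j \<in> Vs \<Longrightarrow> i \<noteq> j \<Longrightarrow> l \<in> Fld i \<Longrightarrow> m \<in> Fld j \<Longrightarrow>
     fa_mul (fa_gen (V i l)) (fa_gen (V j m)) \<in> species_rels F Vs Fld As hh tt tw"
  "fa_diff (\<lambda>w. \<Sum>i\<in>Vs. fa_gen (V i 1) w) (fa_scal 1) \<in> species_rels F Vs Fld As hh tt tw"
  "\<And>c i l. c \<in> F \<Longrightarrow> i \<in> Vs \<Longrightarrow> l \<in> Fld i \<Longrightarrow>
     fa_diff (fa_mul (fa_scal c) (fa_gen (V i l))) (fa_gen (V i (c * l))) \<in> species_rels F Vs Fld As hh tt tw"
  "\<And>a. a \<in> As \<Longrightarrow> fa_diff (fa_gen (Arr a))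
     (fa_mul (fa_mul (fa_gen (V (hh a) 1)) (fa_gen (Arr a))) (fa_gen (V (tt a) 1))) \<in> species_rels F Vs Fld As hh tt tw"
  "\<And>a z. a \<in> As \<Longrightarrow> z \<in> Fld (hh a) \<Longrightarrow> z \<in> Fld (tt a) \<Longrightarrow>
     fa_diff (fa_mul (fa_gen (Arr a)) (fa_gen (V (tt a) z)))
       (fa_mul (fa_gen (V (hh a) (tw a z))) (fa_gen (Arr a))) \<in> species_rels F Vs Fld As hh tt tw"
  unfolding species_rels_def by blast+

lemma vertex_sum_rel:
  "(\<lambda>w. \<Sum>i\<in>{1,2,3::nat}. fa_gen (V i 1) w)
     = (\<lambda>w. fa_gen (V 1 1) w + ((\<lambda>w. fa_gen (V 2 1) w + fa_gen (V 3 1) w) w))"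
  by (simp add: One_nat_def)

lemma hom_fa_one [simp]: "\<rho> (fa_scal 1) = \<one>"
  using H.hom_one by simp

lemma species_rep_if_species_rels_killed:
  assumes k: "\<And>r. r \<in> species_rels F {1,2,3} Fld As qhd qtl tw \<Longrightarrow> \<rho> r = \<zero>"
  shows "species_rep C F Fld As tw (\<lambda>x. \<rho> (fa_gen x)) (\<lambda>c. \<rho> (fa_scal c))"
proof (intro species_rep.intro species_rep_axioms.intro C)
  show "\<rho> (fa_gen x) \<in> carrier C" for x by (simp add: hom_fa_closed)
  show "c \<in> F \<Longrightarrow> \<rho> (fa_scal c) \<in> carrier C" for c by (simp add: hom_fa_closed)
  show "i \<notin> {1,2,3} \<or> l \<notin> Fld i \<Longrightarrow> \<rho> (fa_gen (V i l)) = \<zero>" for i l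
    by (rule k[OF species_rels_memI(1)])
  show "a \<notin> As \<Longrightarrow> \<rho> (fa_gen (Arr a)) = \<zero>" for a
    by (rule k[OF species_rels_memI(2)])
  show "i \<in> {1,2,3} \<Longrightarrow> l \<in> Fld i \<Longrightarrow> m \<in> Fld i \<Longrightarrow>
      \<rho> (fa_gen (V i l)) \<oplus> \<rho> (fa_gen (V i m)) = \<rho> (fa_gen (V i (l + m)))" for i l m
    using k[OF species_rels_memI(3)] by simp
  show "i \<in> {1,2,3} \<Longrightarrow> l \<in> Fld i \<Longrightarrow> m \<in> Fld i \<Longrightarrow>
      \<rho> (fa_gen (V i l)) \<otimes> \<rho> (fa_gen (V i m)) = \<rho> (fa_gen (V i (l * m)))" for i l m
    using k[OF species_rels_memI(4)] by simp
  show "i \<in> {1,2,3} \<Longrightarrow> j \<in> {1,2,3} \<Longrightarrow> i \<noteq> j \<Longrightarrow> l \<in> Fld i \<Longrightarrow> m \<in> Fld j \<Longrightarrow>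
      \<rho> (fa_gen (V i l)) \<otimes> \<rho> (fa_gen (V j m)) = \<zero>" for i j l m
    using k[OF species_rels_memI(5)] by simp
  have "\<rho> (\<lambda>w. \<Sum>i\<in>{1,2,3::nat}. fa_gen (V i 1) w) = \<rho> (fa_scal 1)"
    using k[OF species_rels_memI(6)] F by (simp add: subfield_set_def vertex_sum_rel)
  then show "\<rho> (fa_gen (V 1 1)) \<oplus> (\<rho> (fa_gen (V 2 1)) \<oplus> \<rho> (fa_gen (V 3 1))) = \<one>"
    by (simp add: vertex_sum_rel)
  show "c \<in> F \<Longrightarrow> i \<in> {1,2,3} \<Longrightarrow> l \<in> Fld i \<Longrightarrow>
      \<rho> (fa_scal c) \<otimes> \<rho> (fa_gen (V i l)) = \<rho> (fa_gen (V i (c * l)))" for c i l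
    using k[OF species_rels_memI(7)] by simp
  show "a \<in> As \<Longrightarrow> \<rho> (fa_gen (Arr a))
      = \<rho> (fa_gen (V (qhd a) 1)) \<otimes> \<rho> (fa_gen (Arr a)) \<otimes> \<rho> (fa_gen (V (qtl a) 1))" for a
    using k[OF species_rels_memI(8)] by simp
  show "a \<in> As \<Longrightarrow> z \<in> Fld (qhd a) \<Longrightarrow> z \<in> Fld (qtl a) \<Longrightarrow>
      \<rho> (fa_gen (Arr a)) \<otimes> \<rho> (fa_gen (V (qtl a) z))
      = \<rho> (fa_gen (V (qhd a) (tw a z))) \<otimes> \<rho> (fa_gen (Arr a))" for a z
    using k[OF species_rels_memI(9)] by simp
qed

lemma species_rels_killed_if_species_rep:
  assumes "species_rep C F Fld As tw (\<lambda>x. \<rho> (fa_gen x)) (\<lambda>c. \<rho> (fa_scal c))"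
    and r: "r \<in> species_rels F {1,2,3} Fld As qhd qtl tw"
  shows "\<rho> r = \<zero>"
proof -
  interpret R: species_rep C F Fld As tw "\<lambda>x. \<rho> (fa_gen x)" "\<lambda>c. \<rho> (fa_scal c)" by fact
  from r show ?thesis
    unfolding species_rels_def vertex_sum_rel
    using F R.vertex_outside R.arrow_outside
    by (elim UnE CollectE exE conjE)
       (simp_all add: subfield_set_def R.vertex_add R.vertex_mult R.vertex_orth R.vertex_sum
         R.scal_vertex R.arrow_twist flip: R.arrow_idem)
qed

lemma species_rels_killed_iff:
  "(\<forall>r\<in>species_rels F {1,2,3} Fld As qhd qtl tw. \<rho> r = \<zero>) \<longleftrightarrow>
   species_rep C F Fld As tw (\<lambda>x. \<rho> (fa_gen x)) (\<lambda>c. \<rho> (fa_scal c))"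
  using species_rep_if_species_rels_killed species_rels_killed_if_species_rep by blast

lemma zero_rels_killed_iff: "(\<forall>r\<in>zero_rels. \<rho> r = \<zero>) \<longleftrightarrow> zero_eqs C (\<lambda>x. \<rho> (fa_gen x))"
  unfolding zero_eqs_def zero_rels_def by simp

lemma loop_rel_killed_iff:
  "\<rho> (loop_rel q) = \<zero> \<longleftrightarrow> \<rho> (fa_gen (Arr S1)) \<otimes> \<rho> (fa_gen (Arr S1)) = \<rho> (fa_gen (V 1 q))"
  unfolding loop_rel_def by simp

end

section \<open>Quadratic extensions\<close>

definition quad_coords :: "'a::field set \<Rightarrow> 'a \<Rightarrow> 'a \<Rightarrow> 'a \<times> 'a" where
  "quad_coords K t x = (SOME p. fst p \<in> K \<and> snd p \<in> K \<and> x = fst p + snd p * t)"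

locale quad_ext =
  fixes K :: "'a::field set" and t :: 'a
  assumes K: "subfield_set K" and t_notin: "t \<notin> K" and span: "\<forall>x. \<exists>a\<in>K. \<exists>b\<in>K. x = a + b * t"
begin

lemma K_simps [simp]:
  "0 \<in> K" "1 \<in> K"
  "a \<in> K \<Longrightarrow> b \<in> K \<Longrightarrow> a + b \<in> K"
  "a \<in> K \<Longrightarrow> b \<in> K \<Longrightarrow> a - b \<in> K"
  "a \<in> K \<Longrightarrow> b \<in> K \<Longrightarrow> a * b \<in> K"
  "a \<in> K \<Longrightarrow> inverse a \<in> K"
  using K by (auto simp: subfield_set_def)

abbreviation coord_one :: "'a \<Rightarrow> 'a" where "coord_one x \<equiv> fst (quad_coords K t x)"
abbreviation coord_t :: "'a \<Rightarrow> 'a" where "coord_t x \<equiv> snd (quad_coords K t x)"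

lemma coords: "coord_one x \<in> K" "coord_t x \<in> K" "x = coord_one x + coord_t x * t"
proof -
  obtain a b where "a \<in> K" "b \<in> K" "x = a + b * t" using span by blast
  then have "\<exists>p. fst p \<in> K \<and> snd p \<in> K \<and> x = fst p + snd p * t" by (intro exI[of _ "(a, b)"]) auto
  then show "coord_one x \<in> K" "coord_t x \<in> K" "x = coord_one x + coord_t x * t"
    unfolding quad_coords_def by (metis (mono_tags, lifting) someI_ex)+
qed

lemma quad_coords_eq:
  assumes a: "a \<in> K" and b: "b \<in> K" shows "quad_coords K t (a + b * t) = (a, b)"
proof -
  have unique: "a = a' \<and> b = b'" if "a' \<in> K" "b' \<in> K" "a + b * t = a' + b' * t" for a' b'
  proof (cases "b = b'")
    case False
    then have "t = (a' - a) * inverse (b - b')" using that(3) by (simp add: field_simps)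
    then show ?thesis using t_notin a b that(1,2) by simp
  qed (use that in simp)
  show ?thesis using unique[OF coords(1,2)] coords(3)[of "a + b * t"] by (metis prod.collapse)
qed

lemma quad_coords_K: "k \<in> K \<Longrightarrow> quad_coords K t k = (k, 0)"
  using quad_coords_eq[of k 0] by simp

lemma quad_coords_t: "quad_coords K t t = (0, 1)"
  using quad_coords_eq[of 0 1] by simp

lemma coords_add: "coord_one (x + y) = coord_one x + coord_one y" "coord_t (x + y) = coord_t x + coord_t y"
proof -
  have "x + y = (coord_one x + coord_one y) + (coord_t x + coord_t y) * t"
    by (subst coords(3)[of x], subst coords(3)[of y]) (simp add: algebra_simps)
  then have "quad_coords K t (x + y) = (coord_one x + coord_one y, coord_t x + coord_t y)"
    by (simp add: quad_coords_eq coords)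
  then show "coord_one (x + y) = coord_one x + coord_one y" "coord_t (x + y) = coord_t x + coord_t y"
    by auto
qed

lemma coords_mult:
  assumes tt: "t * t \<in> K"
  shows "coord_one (x * y) = coord_one x * coord_one y + coord_t x * coord_t y * (t * t)"
    and "coord_t (x * y) = coord_one x * coord_t y + coord_t x * coord_one y"
proof -
  have "x * y = (coord_one x * coord_one y + coord_t x * coord_t y * (t * t))
      + (coord_one x * coord_t y + coord_t x * coord_one y) * t"
    by (subst coords(3)[of x], subst coords(3)[of y]) (simp add: algebra_simps)
  then have "quad_coords K t (x * y) = (coord_one x * coord_one y + coord_t x * coord_t y * (t * t),
      coord_one x * coord_t y + coord_t x * coord_one y)"
    by (simp add: quad_coords_eq coords tt)
  then show "coord_one (x * y) = coord_one x * coord_one y + coord_t x * coord_t y * (t * t)"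
    and "coord_t (x * y) = coord_one x * coord_t y + coord_t x * coord_one y" by auto
qed

lemma coords_scal:
  assumes c: "c \<in> K" shows "coord_one (c * x) = c * coord_one x" "coord_t (c * x) = c * coord_t x"
proof -
  have "c * x = c * coord_one x + c * coord_t x * t"
    by (subst coords(3)[of x]) (simp add: algebra_simps)
  then have "quad_coords K t (c * x) = (c * coord_one x, c * coord_t x)"
    by (simp add: quad_coords_eq coords c)
  then show "coord_one (c * x) = c * coord_one x" "coord_t (c * x) = c * coord_t x" by auto
qed

end

section \<open>Trading the field at vertex 1 for a loop\<close>

text \<open>For a representation \<open>e\<close> of \<open>\<Lambda>\<close>, the images of the generators of \<open>\<Lambda>'\<close>:
  \<open>l e\<^sub>1 \<mapsto> a e\<^sub>1 + b s\<^sub>1\<close> when \<open>l = a + b t\<close>.\<close>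

definition field_via_loop :: "('c,'m) ring_scheme \<Rightarrow> 'a::field set \<Rightarrow> 'a \<Rightarrow> ('a sgen \<Rightarrow> 'c)
    \<Rightarrow> 'a sgen \<Rightarrow> 'c" where
  "field_via_loop C K t e x = (case x of
      V i l \<Rightarrow> if i \<in> {2,3} \<and> l \<in> K then e (V i l)
               else if i = 1 then e (V 1 (fst (quad_coords K t l)))
                                  \<oplus>\<^bsub>C\<^esub> e (V 1 (snd (quad_coords K t l))) \<otimes>\<^bsub>C\<^esub> e (Arr S1)
               else \<zero>\<^bsub>C\<^esub>
    | Arr a \<Rightarrow> if a = S1 then \<zero>\<^bsub>C\<^esub> else e (Arr a))"

definition loop_via_field :: "('c,'m) ring_scheme \<Rightarrow> 'a::field set \<Rightarrow> 'a \<Rightarrow> ('a sgen \<Rightarrow> 'c)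
    \<Rightarrow> 'a sgen \<Rightarrow> 'c" where
  "loop_via_field C K t e x = (case x of
      V i l \<Rightarrow> if l \<in> K then e (V i l) else \<zero>\<^bsub>C\<^esub>
    | Arr a \<Rightarrow> if a = S1 then e (V 1 t) else e (Arr a))"

lemma (in ring_hom_ring) field_via_loop_hom:
  assumes "\<And>y. e y \<in> carrier R"
  shows "h (field_via_loop R K t e x) = field_via_loop S K t (\<lambda>y. h (e y)) x"
  using assms by (auto simp: field_via_loop_def split: sgen.split)

lemma (in ring_hom_ring) loop_via_field_hom:
  "h (loop_via_field R K t e x) = loop_via_field S K t (\<lambda>y. h (e y)) x"
  by (auto simp: loop_via_field_def split: sgen.split)

locale loop_datum = quad_ext K t for K :: "'a::field set" and t +
  fixes F :: "'a set" and tw :: "arrow \<Rightarrow> 'a \<Rightarrow> 'a"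
  assumes F_sub: "F \<subseteq> K" and tt_in: "t * t \<in> K" and tw_S1: "tw S1 = id"
    and tw_closed: "z \<in> K \<Longrightarrow> tw a z \<in> K"

locale loop_rep = species_rep C F "\<lambda>_. K" "{Alpha, Beta, Gamma, S1}" tw e sc + loop_datum K t F tw
  for C :: "('c, 'm) ring_scheme" (structure) and F K t tw e sc +
  assumes loop: "e (Arr S1) \<otimes> e (Arr S1) = e (V 1 (t * t))"
    and zero: "zero_eqs C e"
begin

abbreviation "s \<equiv> e (Arr S1)"
abbreviation "e' \<equiv> field_via_loop C K t e"

lemma s_comm: "z \<in> K \<Longrightarrow> s \<otimes> e (V 1 z) = e (V 1 z) \<otimes> s"
  using arrow_twist[of S1 z] by (simp add: qhd_def qtl_def tw_S1)

lemma s_idem: "s = e (V 1 1) \<otimes> s \<otimes> e (V 1 1)"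
  using arrow_idem[of S1] by (simp add: qhd_def qtl_def)

lemma e1_s: "e (V 1 1) \<otimes> s = s"
proof -
  have "e (V 1 1) \<otimes> s = (e (V 1 1) \<otimes> e (V 1 1)) \<otimes> s \<otimes> e (V 1 1)"
    by (subst s_idem) (simp add: m_assoc)
  also have "\<dots> = s" using vertex_mult[of 1 1 1] s_idem[symmetric] by simp
  finally show ?thesis .
qed

lemma s_orth: "j \<in> {2,3} \<Longrightarrow> m \<in> K \<Longrightarrow> s \<otimes> e (V j m) = \<zero>"
proof -
  assume j: "j \<in> {2,3}" and m: "m \<in> K"
  have "s \<otimes> e (V j m) = (e (V 1 1) \<otimes> s) \<otimes> (e (V 1 1) \<otimes> e (V j m))"
    by (subst s_idem) (simp add: m_assoc)
  then show "s \<otimes> e (V j m) = \<zero>" using vertex_orth[of 1 j 1 m] j m by auto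
qed

lemma e'_K: "i \<in> {1,2,3} \<Longrightarrow> k \<in> K \<Longrightarrow> e' (V i k) = e (V i k)"
  by (auto simp: field_via_loop_def quad_coords_K vertex_zero)

lemma e'_closed [simp]: "e' x \<in> carrier C"
  by (auto simp: field_via_loop_def split: sgen.split)

lemma e'_1: "e' (V 1 l) = e (V 1 (coord_one l)) \<oplus> e (V 1 (coord_t l)) \<otimes> s"
  by (simp add: field_via_loop_def)

lemma e'_t: "e' (V 1 t) = s"
  by (simp add: e'_1 quad_coords_t vertex_zero e1_s)

lemma e'_add: "e' (V 1 l) \<oplus> e' (V 1 m) = e' (V 1 (l + m))"
proof -
  have "e' (V 1 l) \<oplus> e' (V 1 m)
      = (e (V 1 (coord_one l)) \<oplus> e (V 1 (coord_one m))) \<oplus> (e (V 1 (coord_t l)) \<oplus> e (V 1 (coord_t m))) \<otimes> s"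
    unfolding e'_1 by (simp add: l_distr a_ac)
  also have "\<dots> = e' (V 1 (l + m))"
    by (simp add: e'_1 vertex_add coords coords_add)
  finally show ?thesis .
qed

lemma vertex_mult_s: "a \<in> K \<Longrightarrow> b \<in> K \<Longrightarrow> e (V 1 a) \<otimes> (e (V 1 b) \<otimes> s) = e (V 1 (a * b)) \<otimes> s"
  by (simp add: m_assoc[symmetric] vertex_mult)

lemma s_mult_vertex: "a \<in> K \<Longrightarrow> b \<in> K \<Longrightarrow> (e (V 1 a) \<otimes> s) \<otimes> e (V 1 b) = e (V 1 (a * b)) \<otimes> s"
  by (simp add: m_assoc s_comm vertex_mult_s)

lemma s_mult_s: "a \<in> K \<Longrightarrow> b \<in> K \<Longrightarrow> (e (V 1 a) \<otimes> s) \<otimes> (e (V 1 b) \<otimes> s) = e (V 1 (a * b * (t * t)))"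
proof -
  assume a: "a \<in> K" and b: "b \<in> K"
  have "(e (V 1 a) \<otimes> s) \<otimes> (e (V 1 b) \<otimes> s) = e (V 1 a) \<otimes> ((s \<otimes> e (V 1 b)) \<otimes> s)"
    by (simp add: m_assoc)
  also have "\<dots> = (e (V 1 a) \<otimes> e (V 1 b)) \<otimes> (s \<otimes> s)"
    using b by (simp add: s_comm m_assoc)
  finally show ?thesis using a b by (simp add: loop vertex_mult tt_in)
qed

lemma e'_mult: "e' (V 1 l) \<otimes> e' (V 1 m) = e' (V 1 (l * m))"
proof -
  let ?a = "coord_one l" and ?b = "coord_t l" and ?c = "coord_one m" and ?d = "coord_t m"
  have K4: "?a \<in> K" "?b \<in> K" "?c \<in> K" "?d \<in> K" by (simp_all add: coords)
  have "e' (V 1 l) \<otimes> e' (V 1 m)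
      = (e (V 1 ?a) \<otimes> e (V 1 ?c) \<oplus> (e (V 1 ?b) \<otimes> s) \<otimes> (e (V 1 ?d) \<otimes> s))
        \<oplus> (e (V 1 ?a) \<otimes> (e (V 1 ?d) \<otimes> s) \<oplus> (e (V 1 ?b) \<otimes> s) \<otimes> e (V 1 ?c))"
    unfolding e'_1 by (simp add: l_distr r_distr a_ac)
  also have "\<dots> = (e (V 1 (?a * ?c)) \<oplus> e (V 1 (?b * ?d * (t * t))))
      \<oplus> (e (V 1 (?a * ?d)) \<oplus> e (V 1 (?b * ?c))) \<otimes> s"
    using K4 by (simp add: vertex_mult vertex_mult_s s_mult_vertex s_mult_s l_distr)
  also have "\<dots> = e' (V 1 (l * m))"
    using K4 by (simp add: e'_1 coords_mult[OF tt_in] vertex_add tt_in mult.commute)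
  finally show ?thesis .
qed

lemma e'_orth:
  assumes ij: "i \<in> {1,2,3}" "j \<in> {1,2,3}" "i \<noteq> j"
    and l: "l \<in> (if i = 1 then UNIV else K)" and m: "m \<in> (if j = 1 then UNIV else K)"
  shows "e' (V i l) \<otimes> e' (V j m) = \<zero>"
proof -
  consider "i = 1" "j \<in> {2,3}" | "i \<in> {2,3}" "j = 1" | "i \<in> {2,3}" "j \<in> {2,3}" using ij by auto
  then show ?thesis
  proof cases
    case 1
    then have "m \<in> K" using m by auto
    with 1 have "e' (V i l) \<otimes> e' (V j m)
        = e (V 1 (coord_one l)) \<otimes> e (V j m) \<oplus> e (V 1 (coord_t l)) \<otimes> (s \<otimes> e (V j m))"
      by (simp add: e'_1 e'_K l_distr m_assoc)
    then show ?thesis using 1 \<open>m \<in> K\<close> vertex_orth[of 1 j] s_orth coords by auto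
  next
    case 2
    then have "l \<in> K" using l by auto
    with 2 have "e' (V i l) \<otimes> e' (V j m)
        = e (V i l) \<otimes> e (V 1 (coord_one m)) \<oplus> (e (V i l) \<otimes> e (V 1 (coord_t m))) \<otimes> s"
      by (simp add: e'_1 e'_K r_distr m_assoc)
    then show ?thesis using 2 \<open>l \<in> K\<close> vertex_orth[of i 1] coords by auto
  qed (use ij l m in \<open>auto simp: e'_K vertex_orth\<close>)
qed

lemma e'_scal:
  assumes c: "c \<in> F" and i: "i \<in> {1,2,3}" and l: "l \<in> (if i = 1 then UNIV else K)"
  shows "sc c \<otimes> e' (V i l) = e' (V i (c * l))"
proof (cases "i = 1")
  case True
  have cK: "c \<in> K" using F_sub c by blast
  have "sc c \<otimes> e' (V i l) = (sc c \<otimes> e (V 1 (coord_one l))) \<oplus> (sc c \<otimes> e (V 1 (coord_t l))) \<otimes> s"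
    using True scal_closed[OF c] by (simp add: e'_1 r_distr m_assoc)
  also have "\<dots> = e' (V 1 (c * l))"
    by (simp add: e'_1 scal_vertex c coords coords_scal[OF cK])
  finally show ?thesis using True by simp
next
  case False
  then have "l \<in> K" "c * l \<in> K" using l F_sub c by auto
  then show ?thesis using i c by (simp add: e'_K scal_vertex)
qed

lemma species_rep_field_via_loop:
  "species_rep C F (\<lambda>i. if i = 1 then UNIV else K) {Alpha, Beta, Gamma} tw e' sc"
proof (intro species_rep.intro species_rep_axioms.intro)
  show "i \<in> {1,2,3} \<Longrightarrow> j \<in> {1,2,3} \<Longrightarrow> i \<noteq> j \<Longrightarrow> l \<in> (if i = 1 then UNIV else K) \<Longrightarrow>
      m \<in> (if j = 1 then UNIV else K) \<Longrightarrow> e' (V i l) \<otimes> e' (V j m) = \<zero>" for i j l m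
    by (rule e'_orth)
  show "c \<in> F \<Longrightarrow> i \<in> {1,2,3} \<Longrightarrow> l \<in> (if i = 1 then UNIV else K) \<Longrightarrow>
      sc c \<otimes> e' (V i l) = e' (V i (c * l))" for c i l
    by (rule e'_scal)
  show "a \<in> {Alpha, Beta, Gamma} \<Longrightarrow> e' (Arr a) = e' (V (qhd a) 1) \<otimes> e' (Arr a) \<otimes> e' (V (qtl a) 1)" for a
    using arrow_idem[of a] by (auto simp: e'_K qhd_def qtl_def field_via_loop_def[of _ _ _ _ "Arr _"])
  show "a \<in> {Alpha, Beta, Gamma} \<Longrightarrow> z \<in> (if qhd a = 1 then UNIV else K) \<Longrightarrow>
      z \<in> (if qtl a = 1 then UNIV else K) \<Longrightarrow> e' (Arr a) \<otimes> e' (V (qtl a) z) = e' (V (qhd a) (tw a z)) \<otimes> e' (Arr a)"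
    for a z
    using arrow_twist[of a z] tw_closed[of z a]
    by (auto simp: e'_K qhd_def qtl_def field_via_loop_def[of _ _ _ _ "Arr _"])
  show "i \<notin> {1,2,3} \<or> l \<notin> (if i = 1 then UNIV else K) \<Longrightarrow> e' (V i l) = \<zero>" for i l
    by (auto simp: field_via_loop_def)
  show "a \<notin> {Alpha, Beta, Gamma} \<Longrightarrow> e' (Arr a) = \<zero>" for a
    by (cases a) (auto simp: field_via_loop_def)
  show "i \<in> {1,2,3} \<Longrightarrow> l \<in> (if i = 1 then UNIV else K) \<Longrightarrow> m \<in> (if i = 1 then UNIV else K) \<Longrightarrow>
      e' (V i l) \<oplus> e' (V i m) = e' (V i (l + m))" for i l m
    by (auto simp: e'_add e'_K vertex_add)
  show "i \<in> {1,2,3} \<Longrightarrow> l \<in> (if i = 1 then UNIV else K) \<Longrightarrow> m \<in> (if i = 1 then UNIV else K) \<Longrightarrow>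
      e' (V i l) \<otimes> e' (V i m) = e' (V i (l * m))" for i l m
    by (auto simp: e'_mult e'_K vertex_mult)
  show "e' (V 1 1) \<oplus> (e' (V 2 1) \<oplus> e' (V 3 1)) = \<one>"
    using vertex_sum by (simp add: e'_K)
qed (simp_all add: scal_closed ring_axioms)

lemma zero_eqs_field_via_loop: "zero_eqs C e'"
  using zero by (simp add: zero_eqs_def field_via_loop_def)

lemma loop_via_field_field_via_loop: "loop_via_field C K t e' y = e y"
proof (cases y)
  case (V i l)
  consider "l \<notin> K" | "l \<in> K" "i \<in> {1,2,3}" | "l \<in> K" "i \<notin> {1,2,3}" by blast
  then show ?thesis
  proof cases
    case 2
    then show ?thesis using V by (simp add: loop_via_field_def e'_K)
  qed (use V vertex_outside in \<open>auto simp: loop_via_field_def field_via_loop_def\<close>)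
next
  case (Arr a)
  then show ?thesis by (cases "a = S1") (simp_all add: loop_via_field_def e'_t, simp add: field_via_loop_def)
qed

end


locale field_rep = species_rep C F "\<lambda>i. if i = 1 then UNIV else K" "{Alpha, Beta, Gamma}" tw e sc
    + loop_datum K t F tw
  for C :: "('c, 'm) ring_scheme" (structure) and F K t tw e sc +
  assumes zero: "zero_eqs C e"
begin

abbreviation "e' \<equiv> loop_via_field C K t e"

lemma e'_K: "k \<in> K \<Longrightarrow> e' (V i k) = e (V i k)"
  by (simp add: loop_via_field_def)

lemma e'_closed [simp]: "e' x \<in> carrier C"
  by (auto simp: loop_via_field_def split: sgen.split)

lemma species_rep_loop_via_field: "species_rep C F (\<lambda>_. K) {Alpha, Beta, Gamma, S1} tw e' sc"
proof (intro species_rep.intro species_rep_axioms.intro)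
  have et: "e (V 1 t) = e (V 1 1) \<otimes> e (V 1 t) \<otimes> e (V 1 1)"
    using vertex_mult[of 1 1 t] vertex_mult[of 1 t 1] by simp
  show "a \<in> {Alpha, Beta, Gamma, S1} \<Longrightarrow> e' (Arr a) = e' (V (qhd a) 1) \<otimes> e' (Arr a) \<otimes> e' (V (qtl a) 1)" for a
    using arrow_idem[of a] et by (auto simp: e'_K qhd_def qtl_def loop_via_field_def[of _ _ _ _ "Arr _"])
  show "e' (Arr a) \<otimes> e' (V (qtl a) z) = e' (V (qhd a) (tw a z)) \<otimes> e' (Arr a)"
    if a: "a \<in> {Alpha, Beta, Gamma, S1}" and z: "z \<in> K" "z \<in> K" for a z
  proof (cases "a = S1")
    case True
    have "e (V 1 t) \<otimes> e (V 1 z) = e (V 1 z) \<otimes> e (V 1 t)"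
      using z vertex_mult[of 1 t z] vertex_mult[of 1 z t] by (simp add: mult.commute)
    then show ?thesis using True z by (simp add: loop_via_field_def qhd_def qtl_def tw_S1)
  next
    case False
    then show ?thesis
      using a z arrow_twist[of a z] tw_closed[of z a]
      by (auto simp: e'_K qhd_def qtl_def loop_via_field_def[of _ _ _ _ "Arr _"])
  qed
  show "i \<notin> {1,2,3} \<or> l \<notin> K \<Longrightarrow> e' (V i l) = \<zero>" for i l
    by (auto simp: loop_via_field_def vertex_outside)
  show "a \<notin> {Alpha, Beta, Gamma, S1} \<Longrightarrow> e' (Arr a) = \<zero>" for a
    by (cases a) auto
  show "c \<in> F \<Longrightarrow> i \<in> {1,2,3} \<Longrightarrow> l \<in> K \<Longrightarrow> sc c \<otimes> e' (V i l) = e' (V i (c * l))" for c i l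
    using scal_vertex[of c i l] F_sub by (auto simp: e'_K)
  show "i \<in> {1,2,3} \<Longrightarrow> l \<in> K \<Longrightarrow> m \<in> K \<Longrightarrow> e' (V i l) \<oplus> e' (V i m) = e' (V i (l + m))"
    for i l m
    using vertex_add[of i l m] by (simp add: e'_K)
  show "i \<in> {1,2,3} \<Longrightarrow> l \<in> K \<Longrightarrow> m \<in> K \<Longrightarrow> e' (V i l) \<otimes> e' (V i m) = e' (V i (l * m))"
    for i l m
    using vertex_mult[of i l m] by (simp add: e'_K)
  show "i \<in> {1,2,3} \<Longrightarrow> j \<in> {1,2,3} \<Longrightarrow> i \<noteq> j \<Longrightarrow> l \<in> K \<Longrightarrow> m \<in> K \<Longrightarrow>
      e' (V i l) \<otimes> e' (V j m) = \<zero>" for i j l m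
    using vertex_orth[of i j l m] by (simp add: e'_K)
  show "e' (V 1 1) \<oplus> (e' (V 2 1) \<oplus> e' (V 3 1)) = \<one>"
    using vertex_sum by (simp add: e'_K)
qed (simp_all add: scal_closed ring_axioms)

lemma zero_eqs_loop_via_field: "zero_eqs C e'"
  using zero by (simp add: zero_eqs_def loop_via_field_def)

lemma loop_via_field_loop: "e' (Arr S1) \<otimes> e' (Arr S1) = e' (V 1 (t * t))"
  using vertex_mult[of 1 t t] tt_in by (simp add: loop_via_field_def)

lemma field_via_loop_loop_via_field: "field_via_loop C K t e' x = e x"
proof (cases x)
  case (V i l)
  consider "i \<in> {2,3}" "l \<in> K" | "i = 1" | "i \<in> {2,3}" "l \<notin> K" | "i \<notin> {1,2,3}" by blast
  then show ?thesis
  proof cases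
    case 2
    have "e (V 1 (coord_one l)) \<oplus> e (V 1 (coord_t l)) \<otimes> e (V 1 t) = e (V 1 l)"
      using vertex_mult[of 1 "coord_t l" t] vertex_add[of 1 "coord_one l" "coord_t l * t"] coords[of l]
      by simp
    then show ?thesis using V 2 by (simp add: field_via_loop_def loop_via_field_def coords)
  qed (use V vertex_outside in \<open>auto simp: field_via_loop_def e'_K\<close>)
next
  case (Arr a)
  then show ?thesis using arrow_outside[of S1] by (simp add: field_via_loop_def loop_via_field_def)
qed

end

lemma species_rep_cong_scal:
  assumes "species_rep C F Fld As tw e sc" and "\<And>c. c \<in> F \<Longrightarrow> sc' c = sc c"
  shows "species_rep C F Fld As tw e sc'"
  using assms by (simp add: species_rep_def species_rep_axioms_def)

context free_alg_hom
begin

lemma field_rels_killed: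
  assumes rep: "field_rep C F K t tw e sc"
    and gen: "\<And>x. \<rho> (fa_gen x) = e x" and scal: "\<And>c. c \<in> F \<Longrightarrow> \<rho> (fa_scal c) = sc c"
    and r: "r \<in> species_rels F {1,2,3} (\<lambda>i. if i = 1 then UNIV else K) {Alpha, Beta, Gamma} qhd qtl tw
      \<union> zero_rels"
  shows "\<rho> r = \<zero>"
proof -
  interpret field_rep C F K t tw e sc by (rule rep)
  have "species_rep C F (\<lambda>i. if i = 1 then UNIV else K) {Alpha, Beta, Gamma} tw
      (\<lambda>x. \<rho> (fa_gen x)) (\<lambda>c. \<rho> (fa_scal c))"
    using species_rep_axioms scal by (simp add: gen species_rep_cong_scal)
  then show ?thesis
    using r zero species_rels_killed_iff zero_rels_killed_iff by (auto simp: gen)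
qed

lemma loop_rels_killed:
  assumes rep: "loop_rep C F K t tw e sc"
    and gen: "\<And>x. \<rho> (fa_gen x) = e x" and scal: "\<And>c. c \<in> F \<Longrightarrow> \<rho> (fa_scal c) = sc c"
    and r: "r \<in> species_rels F {1,2,3} (\<lambda>_. K) {Alpha, Beta, Gamma, S1} qhd qtl tw
      \<union> (zero_rels \<union> {loop_rel (t * t)})"
  shows "\<rho> r = \<zero>"
proof -
  interpret loop_rep C F K t tw e sc by (rule rep)
  have "species_rep C F (\<lambda>_. K) {Alpha, Beta, Gamma, S1} tw
      (\<lambda>x. \<rho> (fa_gen x)) (\<lambda>c. \<rho> (fa_scal c))"
    using species_rep_axioms scal by (simp add: gen species_rep_cong_scal)
  then show ?thesis
    using r zero loop species_rels_killed_iff zero_rels_killed_iff loop_rel_killed_iff by (auto simp: gen)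
qed

end

context
  fixes F K :: "'a::field set" and t :: 'a and tw :: "arrow \<Rightarrow> 'a \<Rightarrow> 'a"
  assumes F: "subfield_set F" and datum: "loop_datum K t F tw"
begin

abbreviation field_rels :: "('a sgen, 'a) fa set" where
  "field_rels \<equiv> species_rels F {1,2,3} (\<lambda>i. if i = 1 then UNIV else K) {Alpha, Beta, Gamma} qhd qtl tw
      \<union> zero_rels"

abbreviation loop_rels :: "('a sgen, 'a) fa set" where
  "loop_rels \<equiv> species_rels F {1,2,3} (\<lambda>_. K) {Alpha, Beta, Gamma, S1} qhd qtl tw
      \<union> (zero_rels \<union> {loop_rel (t * t)})"

lemma species_rels_closed: "species_rels F {1,2,3} Fld As hh tt tw' \<subseteq> carrier (free_alg F)"
  using F by (auto simp: species_rels_def subfield_set_def fa_gen_closed fa_scal_closed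
      fa_mul_closed fa_add_closed fa_diff_closed)

lemma field_rels_closed: "field_rels \<subseteq> carrier (free_alg F)"
  and loop_rels_closed: "loop_rels \<subseteq> carrier (free_alg F)"
  using species_rels_closed F
  by (auto simp: zero_rels_def loop_rel_def fa_gen_closed fa_mul_closed fa_diff_closed)

lemma free_alg_hom_fa_class: "R \<subseteq> carrier (free_alg F) \<Longrightarrow> free_alg_hom F (fa_quot F R) (fa_class F R)"
  using F by (simp add: free_alg_hom_def ring_fa_quot fa_class_ring_hom)

lemma is_subst_hom_free_alg_hom:
  "R \<subseteq> carrier (free_alg F) \<Longrightarrow> is_subst_hom F R g \<Phi> \<Longrightarrow> free_alg_hom F (fa_quot F R) \<Phi>"
  using F ring_fa_quot by (simp add: free_alg_hom_def is_subst_hom_def)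

lemma loop_rep_fa_class:
  "loop_rep (fa_quot F loop_rels) F K t tw (\<lambda>x. fa_class F loop_rels (fa_gen x))
     (\<lambda>c. fa_class F loop_rels (fa_scal c))"
proof -
  interpret free_alg_hom F "fa_quot F loop_rels" "fa_class F loop_rels"
    by (rule free_alg_hom_fa_class[OF loop_rels_closed])
  have k: "\<forall>r\<in>loop_rels. fa_class F loop_rels r = \<zero>\<^bsub>fa_quot F loop_rels\<^esub>"
    using fa_class_rel[OF F loop_rels_closed] by blast
  have "species_rep (fa_quot F loop_rels) F (\<lambda>_. K) {Alpha, Beta, Gamma, S1} tw
      (\<lambda>x. fa_class F loop_rels (fa_gen x)) (\<lambda>c. fa_class F loop_rels (fa_scal c))"
    unfolding species_rels_killed_iff[symmetric] using k by blast
  moreover have "zero_eqs (fa_quot F loop_rels) (\<lambda>x. fa_class F loop_rels (fa_gen x))"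
    unfolding zero_rels_killed_iff[symmetric] using k by blast
  moreover have "fa_class F loop_rels (fa_gen (Arr S1)) \<otimes>\<^bsub>fa_quot F loop_rels\<^esub> fa_class F loop_rels (fa_gen (Arr S1))
      = fa_class F loop_rels (fa_gen (V 1 (t * t)))"
    unfolding loop_rel_killed_iff[symmetric] using k by blast
  ultimately show ?thesis
    using datum by (intro loop_rep.intro loop_rep_axioms.intro)
qed

lemma field_rep_fa_class:
  "field_rep (fa_quot F field_rels) F K t tw (\<lambda>x. fa_class F field_rels (fa_gen x))
     (\<lambda>c. fa_class F field_rels (fa_scal c))"
proof -
  interpret free_alg_hom F "fa_quot F field_rels" "fa_class F field_rels"
    by (rule free_alg_hom_fa_class[OF field_rels_closed])
  have k: "\<forall>r\<in>field_rels. fa_class F field_rels r = \<zero>\<^bsub>fa_quot F field_rels\<^esub>"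
    using fa_class_rel[OF F field_rels_closed] by blast
  have "species_rep (fa_quot F field_rels) F (\<lambda>i. if i = 1 then UNIV else K) {Alpha, Beta, Gamma} tw
      (\<lambda>x. fa_class F field_rels (fa_gen x)) (\<lambda>c. fa_class F field_rels (fa_scal c))"
    unfolding species_rels_killed_iff[symmetric] using k by blast
  moreover have "zero_eqs (fa_quot F field_rels) (\<lambda>x. fa_class F field_rels (fa_gen x))"
    unfolding zero_rels_killed_iff[symmetric] using k by blast
  ultimately show ?thesis
    using datum by (intro field_rep.intro field_rep_axioms.intro)
qed

lemma field_via_loop_closed: "field_via_loop (free_alg F) K t fa_gen x \<in> carrier (free_alg F)"
  using ring.ring_simprules(5)[OF ring_free_alg[OF F]] ring.ring_simprules(2)[OF ring_free_alg[OF F]]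
  by (auto simp: field_via_loop_def fa_gen_closed[OF F] fa_mul_closed[OF F] fa_add_closed[OF F]
      fa_zero_closed[OF F] split: sgen.split)

lemma loop_via_field_closed: "loop_via_field (free_alg F) K t fa_gen x \<in> carrier (free_alg F)"
  by (auto simp: loop_via_field_def fa_gen_closed[OF F] fa_zero_closed[OF F] split: sgen.split)

lemma is_subst_hom_field_via_loop:
  assumes R: "R \<subseteq> carrier (free_alg F)"
    and \<Phi>: "is_subst_hom F R (field_via_loop (free_alg F) K t fa_gen) \<Phi>"
  shows "\<Phi> (fa_gen x) = field_via_loop (fa_quot F R) K t (\<lambda>y. fa_class F R (fa_gen y)) x"
proof -
  interpret ring_hom_ring "free_alg F" "fa_quot F R" "fa_class F R"
    by (rule ring_hom_ringI2[OF ring_free_alg[OF F] ring_fa_quot[OF F R] fa_class_ring_hom[OF F R]])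
  show ?thesis using \<Phi> by (simp add: is_subst_hom_def field_via_loop_hom fa_gen_closed[OF F])
qed

lemma is_subst_hom_loop_via_field:
  assumes R: "R \<subseteq> carrier (free_alg F)"
    and \<Phi>: "is_subst_hom F R (loop_via_field (free_alg F) K t fa_gen) \<Phi>"
  shows "\<Phi> (fa_gen x) = loop_via_field (fa_quot F R) K t (\<lambda>y. fa_class F R (fa_gen y)) x"
proof -
  interpret ring_hom_ring "free_alg F" "fa_quot F R" "fa_class F R"
    by (rule ring_hom_ringI2[OF ring_free_alg[OF F] ring_fa_quot[OF F R] fa_class_ring_hom[OF F R]])
  show ?thesis using \<Phi> by (simp add: is_subst_hom_def loop_via_field_hom)
qed

lemma subst_field_via_loop_kills_field_rels:
  assumes \<Phi>: "is_subst_hom F loop_rels (field_via_loop (free_alg F) K t fa_gen) \<Phi>"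
    and r: "r \<in> field_rels"
  shows "\<Phi> r = \<zero>\<^bsub>fa_quot F loop_rels\<^esub>"
proof -
  let ?Q = "fa_quot F loop_rels" and ?e = "\<lambda>y. fa_class F loop_rels (fa_gen y)"
  have "field_rep ?Q F K t tw (field_via_loop ?Q K t ?e) (\<lambda>c. fa_class F loop_rels (fa_scal c))"
    using loop_rep.species_rep_field_via_loop[OF loop_rep_fa_class]
      loop_rep.zero_eqs_field_via_loop[OF loop_rep_fa_class] datum
    by (intro field_rep.intro field_rep_axioms.intro)
  from free_alg_hom.field_rels_killed[OF is_subst_hom_free_alg_hom[OF loop_rels_closed \<Phi>] this
      is_subst_hom_field_via_loop[OF loop_rels_closed \<Phi>]]
  show ?thesis using \<Phi> r by (simp add: is_subst_hom_def)
qed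

lemma subst_loop_via_field_kills_loop_rels:
  assumes \<Psi>: "is_subst_hom F field_rels (loop_via_field (free_alg F) K t fa_gen) \<Psi>"
    and r: "r \<in> loop_rels"
  shows "\<Psi> r = \<zero>\<^bsub>fa_quot F field_rels\<^esub>"
proof -
  let ?Q = "fa_quot F field_rels" and ?e = "\<lambda>y. fa_class F field_rels (fa_gen y)"
  have "loop_rep ?Q F K t tw (loop_via_field ?Q K t ?e) (\<lambda>c. fa_class F field_rels (fa_scal c))"
    using field_rep.species_rep_loop_via_field[OF field_rep_fa_class]
      field_rep.zero_eqs_loop_via_field[OF field_rep_fa_class]
      field_rep.loop_via_field_loop[OF field_rep_fa_class] datum
    by (intro loop_rep.intro loop_rep_axioms.intro)
  from free_alg_hom.loop_rels_killed[OF is_subst_hom_free_alg_hom[OF field_rels_closed \<Psi>] this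
      is_subst_hom_loop_via_field[OF field_rels_closed \<Psi>]]
  show ?thesis using \<Psi> r by (simp add: is_subst_hom_def)
qed

lemma subst_field_via_loop_inverse:
  assumes \<Phi>: "is_subst_hom F loop_rels (field_via_loop (free_alg F) K t fa_gen) \<Phi>"
  shows "\<Phi> (loop_via_field (free_alg F) K t fa_gen x) = fa_class F loop_rels (fa_gen x)"
proof -
  let ?Q = "fa_quot F loop_rels"
  interpret \<Phi>: ring_hom_ring "free_alg F" ?Q \<Phi>
    using \<Phi> by (intro ring_hom_ringI2 ring_free_alg[OF F] ring_fa_quot[OF F loop_rels_closed])
      (simp add: is_subst_hom_def)
  have "\<Phi> (loop_via_field (free_alg F) K t fa_gen x) = loop_via_field ?Q K t (\<lambda>y. \<Phi> (fa_gen y)) x"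
    by (rule \<Phi>.loop_via_field_hom)
  also have "(\<lambda>y. \<Phi> (fa_gen y)) = field_via_loop ?Q K t (\<lambda>y. fa_class F loop_rels (fa_gen y))"
    by (intro ext is_subst_hom_field_via_loop[OF loop_rels_closed \<Phi>])
  finally show ?thesis by (simp only: loop_rep.loop_via_field_field_via_loop[OF loop_rep_fa_class])
qed

lemma subst_loop_via_field_inverse:
  assumes \<Psi>: "is_subst_hom F field_rels (loop_via_field (free_alg F) K t fa_gen) \<Psi>"
  shows "\<Psi> (field_via_loop (free_alg F) K t fa_gen x) = fa_class F field_rels (fa_gen x)"
proof -
  let ?Q = "fa_quot F field_rels"
  interpret \<Psi>: ring_hom_ring "free_alg F" ?Q \<Psi>
    using \<Psi> by (intro ring_hom_ringI2 ring_free_alg[OF F] ring_fa_quot[OF F field_rels_closed])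
      (simp add: is_subst_hom_def)
  have "\<Psi> (field_via_loop (free_alg F) K t fa_gen x) = field_via_loop ?Q K t (\<lambda>y. \<Psi> (fa_gen y)) x"
    by (rule \<Psi>.field_via_loop_hom) (rule fa_gen_closed[OF F])
  also have "(\<lambda>y. \<Psi> (fa_gen y)) = loop_via_field ?Q K t (\<lambda>y. fa_class F field_rels (fa_gen y))"
    by (intro ext is_subst_hom_loop_via_field[OF field_rels_closed \<Psi>])
  finally show ?thesis by (simp only: field_rep.field_via_loop_loop_via_field[OF field_rep_fa_class])
qed

theorem species_loop_F_alg_iso:
  "F_alg_iso F (fa_quot F field_rels) (fa_quot F loop_rels)
     (\<lambda>c. fa_class F field_rels (fa_scal c)) (\<lambda>c. fa_class F loop_rels (fa_scal c))"
proof (rule fa_quot_F_alg_iso[where g = "field_via_loop (free_alg F) K t fa_gen"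
    and g' = "loop_via_field (free_alg F) K t fa_gen",
    OF F field_rels_closed loop_rels_closed field_via_loop_closed loop_via_field_closed])
  fix \<Phi> r assume "is_subst_hom F loop_rels (field_via_loop (free_alg F) K t fa_gen) \<Phi>" "r \<in> field_rels"
  then show "\<Phi> r = \<zero>\<^bsub>fa_quot F loop_rels\<^esub>" by (rule subst_field_via_loop_kills_field_rels)
next
  fix \<Psi> r assume "is_subst_hom F field_rels (loop_via_field (free_alg F) K t fa_gen) \<Psi>" "r \<in> loop_rels"
  then show "\<Psi> r = \<zero>\<^bsub>fa_quot F field_rels\<^esub>" by (rule subst_loop_via_field_kills_loop_rels)
next
  fix \<Psi> x assume "is_subst_hom F field_rels (loop_via_field (free_alg F) K t fa_gen) \<Psi>"
  then show "\<Psi> (field_via_loop (free_alg F) K t fa_gen x) = fa_class F field_rels (fa_gen x)"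
    by (rule subst_loop_via_field_inverse)
next
  fix \<Phi> x assume "is_subst_hom F loop_rels (field_via_loop (free_alg F) K t fa_gen) \<Phi>"
  then show "\<Phi> (loop_via_field (free_alg F) K t fa_gen x) = fa_class F loop_rels (fa_gen x)"
    by (rule subst_field_via_loop_inverse)
qed

end

declare One_nat_def [simp]

section \<open>Field extensions\<close>

definition field_ring :: "'a::field ring" where
  "field_ring = \<lparr>carrier = UNIV, mult = (*), one = 1, zero = 0, add = (+)\<rparr>"

lemma field_ring_simps [simp]:
  "carrier field_ring = UNIV" "mult field_ring = (*)" "one field_ring = 1"
  "zero field_ring = 0" "add field_ring = (+)"
  by (simp_all add: field_ring_def)

lemma cring_field_ring: "cring (field_ring :: 'a::field ring)"
proof (rule cringI)
  show "abelian_group (field_ring :: 'a ring)"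
    by (rule abelian_groupI) (auto simp: algebra_simps intro: exI[of _ "- _"])
  show "comm_monoid (field_ring :: 'a ring)"
    by (rule comm_monoidI) (auto simp: algebra_simps)
qed (auto simp: algebra_simps)

lemma field_field_ring: "field (field_ring :: 'a::field ring)"
proof -
  interpret cring "field_ring :: 'a ring" by (rule cring_field_ring)
  show ?thesis by (rule cring_fieldI2) (auto intro: exI[of _ "inverse _"] simp: field_simps)
qed

lemma field_ring_uminus: "\<ominus>\<^bsub>field_ring\<^esub> (x :: 'a::field) = - x"
proof -
  interpret cring "field_ring :: 'a ring" by (rule cring_field_ring)
  show ?thesis by (rule minus_equality) auto
qed

lemma field_ring_inverse: "(x :: 'a::field) \<noteq> 0 \<Longrightarrow> inv\<^bsub>field_ring\<^esub> x = inverse x"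
proof -
  interpret cring "field_ring :: 'a ring" by (rule cring_field_ring)
  show "x \<noteq> 0 \<Longrightarrow> inv\<^bsub>field_ring\<^esub> x = inverse x" by (rule inv_unique'[symmetric]) auto
qed

lemma subfield_field_ring: "subfield_set F \<Longrightarrow> subfield F (field_ring :: 'a::field ring)"
proof -
  assume F: "subfield_set F"
  interpret field "field_ring :: 'a ring" by (rule field_field_ring)
  show ?thesis
  proof (rule subfieldI')
    show "subring F field_ring"
      using F by (intro subringI) (auto simp: subfield_set_def field_ring_uminus subfield_set_uminus)
    show "\<And>k. k \<in> F - {\<zero>\<^bsub>field_ring\<^esub>} \<Longrightarrow> inv\<^bsub>field_ring\<^esub> k \<in> F"
      using F by (auto simp: field_ring_inverse subfield_set_def)
  qed
qed

lemma combine_field_ring: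
  "ring.combine field_ring Ks Us = (\<Sum>i<min (length Ks) (length Us). Ks ! i * Us ! i)"
proof -
  interpret cring "field_ring :: 'a ring" by (rule cring_field_ring)
  show ?thesis
    by (induction Ks Us rule: combine.induct) (simp_all del: sum.lessThan_Suc add: sum.lessThan_Suc_shift)
qed

lemma ext_degree_independent_spans:
  fixes F :: "'a::field set" and xs :: "'a list"
  assumes F: "subfield_set F" and deg: "ext_degree_is F n" and len: "length xs = n"
    and indep: "\<And>c. (\<forall>i<n. c i \<in> F) \<Longrightarrow> (\<Sum>i<n. c i * xs ! i) = 0 \<Longrightarrow> \<forall>i<n. c i = 0"
  shows "\<exists>c. (\<forall>i<n. c i \<in> F) \<and> y = (\<Sum>i<n. c i * xs ! i)"
proof -
  interpret E: embedded_algebra F "field_ring :: 'a ring"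
    by (intro embedded_algebra.intro subfield_field_ring[OF F] cring.axioms(1)[OF cring_field_ring])
  have independent: "E.independent F Us"
    if l: "length Us = n" and I: "\<And>c. (\<forall>i<n. c i \<in> F) \<Longrightarrow> (\<Sum>i<n. c i * Us ! i) = 0 \<Longrightarrow> \<forall>i<n. c i = 0"
    for Us :: "'a list"
  proof (rule E.trivial_combine_imp_independent[OF subfield_field_ring[OF F]])
    fix Ks assume Ks: "set Ks \<subseteq> F" and c0: "E.combine Ks Us = \<zero>\<^bsub>field_ring\<^esub>"
    define c where "c i = (if i < length Ks then Ks ! i else 0)" for i
    have cF: "\<forall>i<n. c i \<in> F" using Ks F by (auto simp: c_def subfield_set_def)
    have "(\<Sum>i<n. c i * Us ! i) = (\<Sum>i<min (length Ks) n. Ks ! i * Us ! i)"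
      by (rule sum.mono_neutral_cong_right) (auto simp: c_def)
    also have "\<dots> = 0" using c0 l by (simp add: combine_field_ring)
    finally have "\<forall>i<n. c i = 0" using I cF by blast
    then show "set (take (length Us) Ks) \<subseteq> {\<zero>\<^bsub>field_ring\<^esub>}"
      using l by (auto simp: set_conv_nth c_def)
  qed simp
  obtain b where b_span: "\<forall>x. \<exists>c. (\<forall>i<n. c i \<in> F) \<and> x = (\<Sum>i<n. c i * b i)"
    and b_indep: "\<forall>c. (\<forall>i<n. c i \<in> F) \<longrightarrow> (\<Sum>i<n. c i * b i) = 0 \<longrightarrow> (\<forall>i<n. c i = 0)"
    using deg unfolding ext_degree_is_def by blast
  have "E.Span F (map b [0..<n]) = UNIV"
  proof -
    have "x \<in> E.Span F (map b [0..<n])" for x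
    proof -
      obtain c where c: "\<forall>i<n. c i \<in> F" "x = (\<Sum>i<n. c i * b i)" using b_span by blast
      then have "\<exists>Ks. set Ks \<subseteq> F \<and> length Ks = length (map b [0..<n]) \<and> x = E.combine Ks (map b [0..<n])"
        by (intro exI[of _ "map c [0..<n]"]) (auto simp: combine_field_ring)
      then show ?thesis
        using E.Span_mem_iff_length_version[OF subfield_field_ring[OF F]] by simp
    qed
    then show ?thesis by auto
  qed
  moreover have "E.independent F (map b [0..<n])" by (rule independent) (use b_indep in auto)
  ultimately have "E.dimension n F UNIV"
    using E.dimension_independent subfield_field_ring[OF F] by fastforce
  then have "E.Span F xs = UNIV"
    using E.independent_length_eq_dimension[OF subfield_field_ring[OF F]] independent[OF len indep] len
    by simp
  then obtain Ks where Ks: "set Ks \<subseteq> F" "length Ks = length xs" "y = E.combine Ks xs"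
    using E.Span_mem_iff_length_version[OF subfield_field_ring[OF F], of xs y] by auto
  then show ?thesis
    using len by (intro exI[of _ "\<lambda>i. Ks ! i"]) (auto simp: combine_field_ring set_conv_nth)
qed

lemma field_aut_simps:
  assumes "field_aut s"
  shows "s (x + y) = s x + s y" "s (x * y) = s x * s y" "s 1 = 1" "s (0::'a::field) = 0"
    "s (- x) = - s x" "s (x - y) = s x - s y" "s (inverse x) = inverse (s x)" "s (x ^ k) = s x ^ k"
proof -
  show add: "s (x + y) = s x + s y" and mult: "s (x * y) = s x * s y" and one: "s 1 = 1"
    for x y using assms by (auto simp: field_aut_def)
  have "s 0 + s 0 = s 0 + 0" using add[of 0 0] by simp
  then show zero: "s 0 = 0" by (rule add_left_imp_eq)
  show uminus: "s (- x) = - s x" for x using add[of x "- x"] zero by (simp add: eq_neg_iff_add_eq_0 add.commute)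
  show "s (x - y) = s x - s y" using add[of x "- y"] uminus[of y] by simp
  show "s (inverse x) = inverse (s x)"
  proof (cases "x = 0")
    case False
    then have "s x * s (inverse x) = 1" using mult[of x "inverse x"] one by simp
    then show ?thesis by (metis inverse_unique)
  qed (simp add: zero)
  show "s (x ^ k) = s x ^ k" by (induction k) (simp_all add: one mult)
qed

lemma adjoin_subfield_set: "subfield_set (adjoin F u)"
  unfolding adjoin_def subfield_set_def by auto

lemma subset_adjoin: "F \<subseteq> adjoin F u"
  unfolding adjoin_def by auto

lemma mem_adjoin: "u \<in> adjoin F u"
  unfolding adjoin_def by auto

lemma adjoin_minimal: "subfield_set M \<Longrightarrow> F \<subseteq> M \<Longrightarrow> u \<in> M \<Longrightarrow> adjoin F u \<subseteq> M"
  unfolding adjoin_def by auto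

lemma field_aut_adjoin_closed:
  assumes s: "field_aut s" and s_F: "\<forall>x\<in>F. s x = x" and su: "s u \<in> adjoin F u"
    and x: "x \<in> adjoin F u"
  shows "s x \<in> adjoin F u"
proof -
  have "subfield_set {x. s x \<in> adjoin F u}"
    using adjoin_subfield_set[of F u] by (simp add: subfield_set_def field_aut_simps[OF s])
  then have "adjoin F u \<subseteq> {x. s x \<in> adjoin F u}"
    by (rule adjoin_minimal) (use s_F subset_adjoin[of F u] su in auto)
  then show ?thesis using x by blast
qed

lemma quad_ext_degree_two:
  fixes F :: "'a::field set"
  assumes F: "subfield_set F" and deg: "ext_degree_is F 2" and two: "(2::'a) \<noteq> 0"
    and \<theta>: "\<theta> \<in> Gal F" and u0: "u \<noteq> 0" and \<theta>u: "\<theta> u = - u"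
  shows "quad_ext F u" and "u * u \<in> F"
proof -
  have s: "field_aut \<theta>" and fix_F: "\<And>x. x \<in> F \<Longrightarrow> \<theta> x = x" using \<theta> by (auto simp: Gal_def)
  have uF: "u \<notin> F"
  proof
    assume "u \<in> F"
    then have "2 * u = 0" using fix_F \<theta>u by (metis add_eq_0_iff mult_2)
    then show False using two u0 by simp
  qed
  have span: "\<exists>a\<in>F. \<exists>b\<in>F. x = a + b * u" for x
  proof -
    have "\<exists>c. (\<forall>i<2. c i \<in> F) \<and> x = (\<Sum>i<2. c i * [1, u] ! i)"
    proof (rule ext_degree_independent_spans[OF F deg])
      fix c assume cF: "\<forall>i<2. c i \<in> F" and "(\<Sum>i<2. c i * [1, u] ! i) = 0"
      then have z: "c 0 + c 1 * u = 0" by (simp add: numeral_2_eq_2)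
      have "c 1 = 0"
      proof (rule ccontr)
        assume "c 1 \<noteq> 0"
        then have "u = - c 0 * inverse (c 1)" using z by (simp add: field_simps eq_neg_iff_add_eq_0)
        then show False using uF cF F by (simp add: subfield_set_def subfield_set_uminus)
      qed
      then show "\<forall>i<2. c i = 0" using z by (auto simp: less_2_cases_iff)
    qed simp
    then show ?thesis by (auto simp: numeral_2_eq_2)
  qed
  then show "quad_ext F u" using F uF by (simp add: quad_ext_def)
  obtain a b where ab: "a \<in> F" "b \<in> F" "u * u = a + b * u" using span by blast
  have "\<theta> (u * u) = a - b * u"
    using ab field_aut_simps[OF s] fix_F \<theta>u by simp
  moreover have "\<theta> (u * u) = u * u" using field_aut_simps(2)[OF s] \<theta>u by simp
  ultimately have "2 * (b * u) = 0" using ab(3) by (simp add: algebra_simps)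
  then show "u * u \<in> F" using two u0 ab by simp
qed

locale fourth_root_eigenvector =
  fixes F :: "'a::field set" and \<rho> :: "'a \<Rightarrow> 'a" and \<zeta> v :: 'a
  assumes F: "subfield_set F" and aut: "field_aut \<rho>" and fix_F: "\<And>x. x \<in> F \<Longrightarrow> \<rho> x = x"
    and \<zeta>: "\<zeta> \<in> F" "\<zeta> ^ 4 = 1" "\<zeta> ^ 2 \<noteq> 1"
    and v0: "v \<noteq> 0" and \<rho>v: "\<rho> v = \<zeta> * v"
begin

lemma zeta_square: "\<zeta> * \<zeta> = -1"
proof -
  have "(\<zeta> * \<zeta> - 1) * (\<zeta> * \<zeta> + 1) = 0" using \<zeta>(2) by (simp add: algebra_simps power4_eq_xxxx)
  then show ?thesis using \<zeta>(3) by (simp add: power2_eq_square eq_neg_iff_add_eq_0)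
qed

lemma two_neq_zero: "(2::'a) \<noteq> 0"
proof
  assume "(2::'a) = 0"
  then have "(1::'a) = -1" by (simp add: eq_neg_iff_add_eq_0 one_add_one)
  then show False using \<zeta>(3) zeta_square by (simp add: power2_eq_square)
qed

text \<open>The four conjugates \<open>\<pm>v, \<pm>\<zeta> v\<close> of \<open>v\<close> are roots of every \<open>F\<close>-polynomial vanishing at \<open>v\<close>,
  and a cubic with four distinct roots is zero.\<close>

lemma powers_independent:
  assumes c: "c0 \<in> F" "c1 \<in> F" "c2 \<in> F" "c3 \<in> F" and P0: "c0 + c1 * v + c2 * v^2 + c3 * v^3 = 0"
  shows "c0 = 0 \<and> c1 = 0 \<and> c2 = 0 \<and> c3 = 0"
proof -
  define P where "P w = c0 + c1 * w + c2 * w^2 + c3 * w^3" for w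
  have \<rho>P: "\<rho> (P w) = P (\<rho> w)" for w
    by (simp add: P_def field_aut_simps[OF aut] fix_F c)
  have \<rho>\<zeta>: "\<rho> (\<zeta> * w) = \<zeta> * \<rho> w" for w by (simp add: field_aut_simps[OF aut] fix_F \<zeta>)
  have \<zeta>\<zeta>: "\<zeta> * (\<zeta> * w) = - w" for w by (simp add: mult.assoc[symmetric] zeta_square)
  have P1: "P v = 0" using P0 by (simp add: P_def)
  then have P2: "P (\<zeta> * v) = 0" using \<rho>P[of v] \<rho>v field_aut_simps(4)[OF aut] by simp
  then have P3: "P (- v) = 0" using \<rho>P[of "\<zeta> * v"] \<rho>v \<rho>\<zeta> \<zeta>\<zeta> field_aut_simps(4)[OF aut] by simp
  then have P4: "P (- (\<zeta> * v)) = 0" using \<rho>P[of "- v"] \<rho>v field_aut_simps(4,5)[OF aut] by simp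
  note P = P1 P2 P3 P4
  have two: "(2::'a) \<noteq> 0" by (rule two_neq_zero)
  have four: "(4::'a) \<noteq> 0" using two mult_eq_0_iff[of "2::'a" 2] by simp
  have \<zeta>0: "\<zeta> \<noteq> 0" using zeta_square by auto
  have \<zeta>2: "\<zeta>^2 = -1" and \<zeta>3: "\<zeta>^3 = -\<zeta>" using zeta_square by (simp_all add: power2_eq_square power3_eq_cube)
  have "4 * c0 = P v + P (- v) + P (\<zeta> * v) + P (- (\<zeta> * v))"
    by (simp add: P_def power_mult_distrib \<zeta>2 \<zeta>3 algebra_simps)
  then have "c0 = 0" using P four by simp
  have "4 * (c2 * v^2) = P v + P (- v) - P (\<zeta> * v) - P (- (\<zeta> * v))"
    by (simp add: P_def power_mult_distrib \<zeta>2 \<zeta>3 algebra_simps)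
  then have "c2 * v^2 = 0" using P four by simp
  have "2 * (c1 * v + c3 * v^3) = P v - P (- v)"
    by (simp add: P_def algebra_simps)
  then have sum: "c1 * v + c3 * v^3 = 0" using P two by (metis diff_self mult_eq_0_iff)
  have "2 * (\<zeta> * (c1 * v - c3 * v^3)) = P (\<zeta> * v) - P (- (\<zeta> * v))"
    by (simp add: P_def power_mult_distrib \<zeta>2 \<zeta>3 algebra_simps)
  then have diff: "c1 * v - c3 * v^3 = 0" using P two \<zeta>0 by (metis diff_self mult_eq_0_iff)
  have "2 * (c1 * v) = (c1 * v + c3 * v^3) + (c1 * v - c3 * v^3)" by (simp add: algebra_simps)
  then have "c1 * v = 0" using sum diff two by (metis add_0 mult_eq_0_iff)
  moreover from this have "c3 * v^3 = 0" using sum by (metis add_0)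
  ultimately have "c1 * v = 0" "c3 * v^3 = 0" "c2 * v^2 = 0" "c0 = 0"
    using \<open>c0 = 0\<close> \<open>c2 * v^2 = 0\<close> by simp_all
  then show ?thesis using v0 by simp
qed

lemma aut_aut_v: "\<rho> (\<rho> v) = - v"
  using \<rho>v zeta_square by (simp add: field_aut_simps[OF aut] fix_F \<zeta> mult.assoc[symmetric])

lemma aut_v_square: "\<rho> (v^2) = - (v^2)"
proof -
  have "\<rho> (v^2) = (\<zeta> * \<zeta>) * (v * v)"
    using \<rho>v by (simp add: field_aut_simps[OF aut] power2_eq_square ac_simps)
  then show ?thesis by (simp add: zeta_square power2_eq_square)
qed

lemma aut_adjoin_closed: "z \<in> adjoin F (v^2) \<Longrightarrow> \<rho> z \<in> adjoin F (v^2)"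
proof -
  have "\<rho> (v^2) \<in> adjoin F (v^2)"
    unfolding aut_v_square by (rule subfield_set_uminus[OF adjoin_subfield_set mem_adjoin])
  then show "z \<in> adjoin F (v^2) \<Longrightarrow> \<rho> z \<in> adjoin F (v^2)"
    using field_aut_adjoin_closed[OF aut] fix_F by blast
qed

lemma not_mem_adjoin: "v \<notin> adjoin F (v^2)"
proof
  have "subfield_set {x. \<rho> (\<rho> x) = x}"
    by (simp add: subfield_set_def field_aut_simps[OF aut])
  then have "adjoin F (v^2) \<subseteq> {x. \<rho> (\<rho> x) = x}"
    by (rule adjoin_minimal) (use fix_F aut_v_square field_aut_simps(5)[OF aut] in auto)
  moreover assume "v \<in> adjoin F (v^2)"
  ultimately have "v = - v" using aut_aut_v by auto
  then have "2 * v = 0" by (metis add_eq_0_iff mult_2)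
  then show False using two_neq_zero v0 by simp
qed

lemma adjoin_span:
  assumes deg: "ext_degree_is F 4"
  shows "\<exists>a\<in>adjoin F (v^2). \<exists>b\<in>adjoin F (v^2). x = a + b * v"
proof -
  have sum4: "(\<Sum>i<4. c i * [1, v, v^2, v^3] ! i) = c 0 + c 1 * v + c 2 * v^2 + c 3 * v^3" for c
    by (simp add: numeral_eq_Suc ac_simps)
  have "\<exists>c. (\<forall>i<4. c i \<in> F) \<and> x = (\<Sum>i<4. c i * [1, v, v^2, v^3] ! i)"
  proof (rule ext_degree_independent_spans[OF F deg])
    fix c assume "\<forall>i<4. c i \<in> F" "(\<Sum>i<4. c i * [1, v, v^2, v^3] ! i) = 0"
    then have "c 0 = 0 \<and> c 1 = 0 \<and> c 2 = 0 \<and> c 3 = 0"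
      by (intro powers_independent) (auto simp: sum4)
    then show "\<forall>i<4. c i = 0" by (auto simp: less_Suc_eq numeral_eq_Suc)
  qed simp
  then obtain c :: "nat \<Rightarrow> 'a" where c: "\<forall>i<4. c i \<in> F" "x = c 0 + c 1 * v + c 2 * v^2 + c 3 * v^3"
    by (auto simp: sum4)
  have "c i \<in> adjoin F (v^2)" if "i < 4" for i using c(1) that subset_adjoin[of F "v^2"] by blast
  then have "c 0 + c 2 * v^2 \<in> adjoin F (v^2)" "c 1 + c 3 * v^2 \<in> adjoin F (v^2)"
    using mem_adjoin[of "v^2" F] adjoin_subfield_set[of F "v^2"] by (simp_all add: subfield_set_def)
  moreover have "x = (c 0 + c 2 * v^2) + (c 1 + c 3 * v^2) * v"
    using c(2) by (simp add: algebra_simps power2_eq_square power3_eq_cube)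
  ultimately show ?thesis by blast
qed

lemma quad_ext_adjoin: "ext_degree_is F 4 \<Longrightarrow> quad_ext (adjoin F (v^2)) v"
  using adjoin_subfield_set not_mem_adjoin adjoin_span by (simp add: quad_ext_def)

end

lemma species_iso_degree_four:
  fixes F :: "'a::field set" and xa xb xc :: nat
  assumes cyc: "cyclic_galois F 4 \<rho>" and \<zeta>: "\<zeta> \<in> F" "\<zeta> ^ 4 = 1" "\<zeta> ^ 2 \<noteq> 1"
    and v0: "v \<noteq> 0" and \<rho>v: "\<rho> v = \<zeta> * v"
    and tw: "tw = (\<lambda>a. case a of Alpha \<Rightarrow> \<rho> ^^ xa | Beta \<Rightarrow> \<rho> ^^ xb | Gamma \<Rightarrow> \<rho> ^^ xc | S1 \<Rightarrow> id)"
  shows "F_alg_iso F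
     (species_quot F {1,2,3} (\<lambda>i. if i = 1 then UNIV else adjoin F (v^2)) {Alpha, Beta, Gamma} qhd qtl tw
        zero_rels)
     (species_quot F {1,2,3} (\<lambda>_. adjoin F (v^2)) {Alpha, Beta, Gamma, S1} qhd qtl tw
        (zero_rels \<union> {loop_rel (v^2)}))
     (species_scal F {1,2,3} (\<lambda>i. if i = 1 then UNIV else adjoin F (v^2)) {Alpha, Beta, Gamma} qhd qtl tw
        zero_rels)
     (species_scal F {1,2,3} (\<lambda>_. adjoin F (v^2)) {Alpha, Beta, Gamma, S1} qhd qtl tw
        (zero_rels \<union> {loop_rel (v^2)}))"
proof -
  interpret fourth_root_eigenvector F \<rho> \<zeta> v
    by unfold_locales (use cyc \<zeta> v0 \<rho>v in \<open>auto simp: cyclic_galois_def Gal_def\<close>)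
  have "(\<rho> ^^ k) z \<in> adjoin F (v^2)" if "z \<in> adjoin F (v^2)" for k z
    by (induction k) (simp_all add: that aut_adjoin_closed)
  then have "loop_datum (adjoin F (v^2)) v F tw"
    using quad_ext_adjoin cyc subset_adjoin[of F "v^2"] mem_adjoin[of "v^2" F]
    by (auto simp: loop_datum_def loop_datum_axioms_def tw power2_eq_square cyclic_galois_def
        split: arrow.split)
  with cyc show ?thesis
    unfolding species_quot_def species_scal_def power2_eq_square
    by (intro species_loop_F_alg_iso) (simp_all add: cyclic_galois_def)
qed

lemma species_iso_degree_two:
  fixes F :: "'a::field set"
  assumes F: "subfield_set F" and deg: "ext_degree_is F 2" and two: "(2::'a) \<noteq> 0"
    and \<theta>: "\<theta> \<in> Gal F" and u0: "u \<noteq> 0" and \<theta>u: "\<theta> u = - u"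
  shows "F_alg_iso F
     (species_quot F {1,2,3} (\<lambda>i. if i = 1 then UNIV else F) {Alpha, Beta, Gamma} qhd qtl (\<lambda>_. id)
        zero_rels)
     (species_quot F {1,2,3} (\<lambda>_. F) {Alpha, Beta, Gamma, S1} qhd qtl (\<lambda>_. id)
        (zero_rels \<union> {loop_rel (u^2)}))
     (species_scal F {1,2,3} (\<lambda>i. if i = 1 then UNIV else F) {Alpha, Beta, Gamma} qhd qtl (\<lambda>_. id)
        zero_rels)
     (species_scal F {1,2,3} (\<lambda>_. F) {Alpha, Beta, Gamma, S1} qhd qtl (\<lambda>_. id)
        (zero_rels \<union> {loop_rel (u^2)}))"
proof -
  note Q = quad_ext_degree_two[OF F deg two \<theta> u0 \<theta>u]
  have "loop_datum F u F (\<lambda>_. id)"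
    using Q by (simp add: loop_datum_def loop_datum_axioms_def)
  then show ?thesis
    unfolding species_quot_def species_scal_def power2_eq_square
    by (rule species_loop_F_alg_iso[OF F])
qed

theorem proposition4p3:
  shows "(\<forall>(F :: 'a::field set) \<rho> \<zeta> v (xa::nat) xb xc.
           cyclic_galois F 4 \<rho> \<and> \<zeta> \<in> F \<and> \<zeta> ^ 4 = 1 \<and> \<zeta> ^ 2 \<noteq> 1 \<and>
           v \<noteq> 0 \<and> \<rho> v = \<zeta> * v \<and> xa < 2 \<and> xb < 2 \<and> xc < 2 \<and> even (xa + xb + xc) \<longrightarrow>
           (let u = v ^ 2; L = adjoin F u;
                Fld' = (\<lambda>i. if i = 1 then UNIV else L);
                tw = (\<lambda>a. case a of Alpha \<Rightarrow> \<rho> ^^ xa | Beta \<Rightarrow> \<rho> ^^ xb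
                                   | Gamma \<Rightarrow> \<rho> ^^ xc | S1 \<Rightarrow> id)
            in F_alg_iso F
                 (species_quot F {1,2,3} Fld' {Alpha, Beta, Gamma} qhd qtl tw zero_rels)
                 (species_quot F {1,2,3} (\<lambda>_. L) {Alpha, Beta, Gamma, S1} qhd qtl tw
                    (zero_rels \<union> {loop_rel u}))
                 (species_scal F {1,2,3} Fld' {Alpha, Beta, Gamma} qhd qtl tw zero_rels)
                 (species_scal F {1,2,3} (\<lambda>_. L) {Alpha, Beta, Gamma, S1} qhd qtl tw
                    (zero_rels \<union> {loop_rel u}))))
       \<and>
       (\<forall>(F :: 'b::field set) \<theta> u.
           subfield_set F \<and> ext_degree_is F 2 \<and> (2::'b) \<noteq> 0 \<and>
           \<theta> \<in> Gal F \<and> \<theta> \<noteq> id \<and> u \<noteq> 0 \<and> \<theta> u = - u \<longrightarrow>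
           (let Fld' = (\<lambda>i. if i = 1 then UNIV else F); tw = (\<lambda>_. id)
            in F_alg_iso F
                 (species_quot F {1,2,3} Fld' {Alpha, Beta, Gamma} qhd qtl tw zero_rels)
                 (species_quot F {1,2,3} (\<lambda>_. F) {Alpha, Beta, Gamma, S1} qhd qtl tw
                    (zero_rels \<union> {loop_rel (u ^ 2)}))
                 (species_scal F {1,2,3} Fld' {Alpha, Beta, Gamma} qhd qtl tw zero_rels)
                 (species_scal F {1,2,3} (\<lambda>_. F) {Alpha, Beta, Gamma, S1} qhd qtl tw
                    (zero_rels \<union> {loop_rel (u ^ 2)}))))"
  unfolding Let_def
  using species_iso_degree_four species_iso_degree_two by blast

end
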